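(* Let $U$ be a connected graph on $n>2$ vertices that has exactly one cycle, this cycle has $3$ vertices, and $U$ is obtained from the triangle by attaching a (possibly trivial) tree at one vertex of the triangle (so at most one vertex of the triangle has degree greater than $2$ in $U$). Let $\Delta$ be the distance squared matrix of $U$ and let $\ell$ be the number of leaves (vertices of degree $1$) of $U$. Then $i_-(\Delta)=\ell+2$.
   Context: For a connected graph $G$ with vertices $1,\dots,n$, the distance squared matrix $\Delta$ is the $n\times n$ matrix with $(i,j)$ entry $d_{ij}^2$, where $d_{ij}$ is the graph distance between $i$ and $j$. For a real symmetric matrix $M$, $i_-(M)$ denotes the number of negative eigenvalues of $M$ counted with multiplicity. *)

theory Defs
  imports "Jordan_Normal_Form.Char_Poly"
begin

text \<open>Simple graphs on vertex set {0..<n}, given by an adjacency relation E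
  (required to be symmetric and irreflexive on the vertex set).\<close>

definition is_walk :: "(nat \<Rightarrow> nat \<Rightarrow> bool) \<Rightarrow> nat \<Rightarrow> nat list \<Rightarrow> bool" where
  "is_walk E n xs \<longleftrightarrow> xs \<noteq> [] \<and> set xs \<subseteq> {..<n} \<and>
     (\<forall>i. i + 1 < length xs \<longrightarrow> E (xs ! i) (xs ! (i + 1)))"

definition connected_graph :: "(nat \<Rightarrow> nat \<Rightarrow> bool) \<Rightarrow> nat \<Rightarrow> bool" where
  "connected_graph E n \<longleftrightarrow> (\<forall>i<n. \<forall>j<n. \<exists>xs. is_walk E n xs \<and> hd xs = i \<and> last xs = j)"

definition graph_dist :: "(nat \<Rightarrow> nat \<Rightarrow> bool) \<Rightarrow> nat \<Rightarrow> nat \<Rightarrow> nat \<Rightarrow> nat" where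
  "graph_dist E n i j = (LEAST k. \<exists>xs. is_walk E n xs \<and> hd xs = i \<and> last xs = j \<and> length xs = k + 1)"

definition is_cycle :: "(nat \<Rightarrow> nat \<Rightarrow> bool) \<Rightarrow> nat \<Rightarrow> nat list \<Rightarrow> bool" where
  "is_cycle E n xs \<longleftrightarrow> length xs \<ge> 3 \<and> distinct xs \<and> is_walk E n xs \<and> E (last xs) (hd xs)"

definition degree :: "(nat \<Rightarrow> nat \<Rightarrow> bool) \<Rightarrow> nat \<Rightarrow> nat \<Rightarrow> nat" where
  "degree E n v = card {w. w < n \<and> E v w}"

definition leaves :: "(nat \<Rightarrow> nat \<Rightarrow> bool) \<Rightarrow> nat \<Rightarrow> nat set" where
  "leaves E n = {v. v < n \<and> degree E n v = 1}"

definition dist_sq_matrix :: "(nat \<Rightarrow> nat \<Rightarrow> bool) \<Rightarrow> nat \<Rightarrow> real mat" where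
  "dist_sq_matrix E n = mat n n (\<lambda>(i, j). real ((graph_dist E n i j)\<^sup>2))"

text \<open>Number of negative eigenvalues counted with (algebraic) multiplicity,
  i.e. negative roots of the characteristic polynomial with multiplicity.
  For real symmetric matrices this is i_-.\<close>
definition neg_inertia :: "real mat \<Rightarrow> nat" where
  "neg_inertia M = (\<Sum>a\<in>{a. a < 0 \<and> poly (char_poly M) a = 0}. order a (char_poly M))"

end

theory Submission
  imports Defs
begin

text \<open>Let a be the vertex of the triangle carrying the tree and order the vertices by the
  breadth-first tree rooted at a. Let C be the matrix whose row for a is e_a, for c is
  e_c - e_b, for a child v of a is e_a - e_v, and for a deeper vertex v is the second
  difference 2 e_p - e_v - e_q along the path v, p, q towards a. C is invertible, and since
  the distance to a vertex changes by exactly one along each tree edge, the entries of the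
  congruent matrix C D C^T are small integers determined by the parent relation alone. Its
  quadratic form is negative definite on a space of dimension l + 2, spanned by e_b, e_c, a
  vector supported on a and its children, and the differences of a child and the first child
  of its parent; it is positive semidefinite on a space of dimension n - l - 2, spanned by the
  indicator vectors of the sets of children. Sylvester's law of inertia, derived from the
  spectral theorem, gives i_-(D) = l + 2.\<close>

section \<open>Spectral theorem and negative inertia\<close>

lemma sum_delta_left: "i < (n::nat) \<Longrightarrow> (\<Sum>k<n. (if i = k then 1 else 0) * (f k :: real)) = f i"
  by (simp add: if_distrib[where f = "\<lambda>x. x * _"] cong: if_cong)

lemma sum_delta_right: "i < (n::nat) \<Longrightarrow> (\<Sum>k<n. (if k = i then 1 else 0) * (f k :: real)) = f i"
  by (simp add: if_distrib[where f = "\<lambda>x. x * _"] cong: if_cong)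

lemma symmetric_eigenvalue_real:
  fixes A :: "real mat"
  assumes A: "A \<in> carrier_mat n n"
    and sym: "\<And>i j. i < n \<Longrightarrow> j < n \<Longrightarrow> A $$ (i,j) = A $$ (j,i)"
    and ev: "eigenvalue (map_mat complex_of_real A) z"
  shows "cnj z = z"
proof -
  define Ac where "Ac = map_mat complex_of_real A"
  have Ac: "Ac \<in> carrier_mat n n" using A by (simp add: Ac_def)
  obtain v where v: "v \<in> carrier_vec n" "v \<noteq> 0\<^sub>v n" "Ac *\<^sub>v v = z \<cdot>\<^sub>v v"
    using ev Ac unfolding Ac_def[symmetric] eigenvalue_def eigenvector_def by auto
  define s where "s = (\<Sum>i<n. \<Sum>j<n. cnj (v $ i) * (complex_of_real (A $$ (i,j)) * v $ j))"
  define N where "N = (\<Sum>i<n. cnj (v $ i) * v $ i)"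
  have row: "(\<Sum>j<n. complex_of_real (A $$ (i,j)) * v $ j) = z * v $ i" if "i < n" for i
  proof -
    have "(Ac *\<^sub>v v) $ i = (\<Sum>j<n. complex_of_real (A $$ (i,j)) * v $ j)"
      using that A v(1) unfolding Ac_def by (auto simp: mult_mat_vec_def scalar_prod_def lessThan_atLeast0)
    then show ?thesis using v(3) that v(1) by simp
  qed
  have "s = (\<Sum>i<n. cnj (v $ i) * (\<Sum>j<n. complex_of_real (A $$ (i,j)) * v $ j))"
    unfolding s_def by (simp add: sum_distrib_left)
  also have "\<dots> = (\<Sum>i<n. z * (cnj (v $ i) * v $ i))" by (intro sum.cong refl) (simp add: row)
  finally have s_eq: "s = z * N" unfolding N_def by (simp add: sum_distrib_left)
  have "cnj s = (\<Sum>i<n. \<Sum>j<n. v $ i * (complex_of_real (A $$ (i,j)) * cnj (v $ j)))"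
    unfolding s_def by (simp add: cnj_sum)
  also have "\<dots> = (\<Sum>j<n. \<Sum>i<n. v $ i * (complex_of_real (A $$ (i,j)) * cnj (v $ j)))"
    by (rule sum.swap)
  also have "\<dots> = s" unfolding s_def by (intro sum.cong refl) (simp add: sym mult_ac)
  finally have s_real: "cnj s = s" .
  have N_real: "cnj N = N" unfolding N_def by (simp add: cnj_sum mult.commute)
  have "N = v \<bullet>c v" unfolding N_def using v(1) by (simp add: scalar_prod_def lessThan_atLeast0 mult.commute)
  then have "N \<noteq> 0" using v(1,2) by simp
  moreover have "cnj z * N = z * N" using s_eq s_real N_real by (metis complex_cnj_mult)
  ultimately show ?thesis by simp
qed

lemma symmetric_real_eigenvector:
  fixes A :: "real mat"
  assumes A: "A \<in> carrier_mat n n"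
    and sym: "\<And>i j. i < n \<Longrightarrow> j < n \<Longrightarrow> A $$ (i,j) = A $$ (j,i)"
    and n: "n > 0"
  obtains r v where "v \<in> carrier_vec n" "v \<noteq> 0\<^sub>v n" "A *\<^sub>v v = r \<cdot>\<^sub>v v"
proof -
  define Ac where "Ac = map_mat complex_of_real A"
  have Ac: "Ac \<in> carrier_mat n n" using A by (simp add: Ac_def)
  obtain zs where cp: "char_poly Ac = (\<Prod>a\<leftarrow>zs. [:- a, 1:])" and len: "length zs = n"
    using char_poly_factorized[OF Ac] by blast
  from len n obtain z zs' where "zs = z # zs'" by (cases zs) auto
  then have root: "poly (char_poly Ac) z = 0" unfolding cp by simp
  then have "cnj z = z"
    using symmetric_eigenvalue_real[OF A sym] eigenvalue_root_char_poly[OF Ac] by (simp add: Ac_def)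
  then have z: "z = complex_of_real (Re z)" by (simp add: complex_eq_iff)
  have "char_poly Ac = map_poly complex_of_real (char_poly A)"
    unfolding Ac_def by (rule of_real_hom.char_poly_hom[OF A])
  then have "poly (map_poly complex_of_real (char_poly A)) (complex_of_real (Re z)) = 0"
    using root z by simp
  then have "poly (char_poly A) (Re z) = 0" by simp
  then have "eigenvalue A (Re z)" using eigenvalue_root_char_poly[OF A] by simp
  then show ?thesis using that A unfolding eigenvalue_def eigenvector_def by auto
qed

text \<open>The reflection swapping the first unit vector and the unit vector u; for u equal to the first
  unit vector, division by zero makes it the identity.\<close>
definition householder :: "nat \<Rightarrow> real vec \<Rightarrow> real mat" where
  "householder n u = (let w = u - unit_vec n 0 in
     mat n n (\<lambda>(i,j). (if i = j then 1 else 0) - 2 / (w \<bullet> w) * (w $ i * w $ j)))"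

lemma householder_carrier: "householder n u \<in> carrier_mat n n"
  by (simp add: householder_def Let_def)

lemma transpose_householder: "transpose_mat (householder n u) = householder n u"
  by (rule eq_matI) (auto simp: householder_def Let_def mult.commute)

lemma householder_involution:
  assumes u: "u \<in> carrier_vec n"
  shows "householder n u * householder n u = 1\<^sub>m n"
proof -
  define w where "w = u - unit_vec n 0"
  define c where "c = 2 / (w \<bullet> w)"
  have H: "householder n u = mat n n (\<lambda>(i,j). (if i = j then 1 else 0) - c * (w $ i * w $ j))"
    by (simp add: householder_def Let_def w_def c_def)
  have ww: "w \<bullet> w = (\<Sum>k<n. w $ k * w $ k)"
    using u by (simp add: w_def scalar_prod_def lessThan_atLeast0)
  have cc: "c * c * (w \<bullet> w) = 2 * c" by (cases "w \<bullet> w = 0") (auto simp: c_def power2_eq_square)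
  show ?thesis
  proof (rule eq_matI)
    fix i j assume "i < dim_row (1\<^sub>m n)" "j < dim_col (1\<^sub>m n)"
    then have i: "i < n" and j: "j < n" by auto
    have "(householder n u * householder n u) $$ (i,j) = (\<Sum>k<n. ((if i = k then 1 else 0)
        - c * (w $ i * w $ k)) * ((if k = j then 1 else 0) - c * (w $ k * w $ j)))"
      unfolding H using i j by (simp add: scalar_prod_def lessThan_atLeast0 row_def col_def)
    also have "\<dots> = (\<Sum>k<n. (if i = k then 1 else 0) * (if k = j then 1 else 0))
        - c * w $ j * (\<Sum>k<n. (if i = k then 1 else 0) * w $ k)
        - c * w $ i * (\<Sum>k<n. (if k = j then 1 else 0) * w $ k)
        + c * c * w $ i * w $ j * (\<Sum>k<n. w $ k * w $ k)"
      by (simp add: algebra_simps sum.distrib sum_subtractf sum_distrib_left)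
    also have "\<dots> = (if i = j then 1 else 0) - c * w $ j * w $ i - c * w $ i * w $ j
        + c * c * (w \<bullet> w) * w $ i * w $ j"
      using i j sum_delta_left[OF i, of "\<lambda>k. if k = j then 1 else 0"]
      by (simp add: sum_delta_left sum_delta_right ww)
    also have "\<dots> = (if i = j then 1 else 0)" unfolding cc by (simp add: algebra_simps)
    finally show "(householder n u * householder n u) $$ (i,j) = 1\<^sub>m n $$ (i,j)" using i j by simp
  qed (auto simp: H)
qed

lemma householder_unit_vec:
  assumes u: "u \<in> carrier_vec n" and n: "n > 0" and uu: "u \<bullet> u = 1"
  shows "householder n u *\<^sub>v unit_vec n 0 = u"
proof -
  define w where "w = u - unit_vec n 0"
  define c where "c = 2 / (w \<bullet> w)"
  have w: "w \<in> carrier_vec n" using u by (simp add: w_def)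
  have H: "householder n u = mat n n (\<lambda>(i,j). (if i = j then 1 else 0) - c * (w $ i * w $ j))"
    by (simp add: householder_def Let_def w_def c_def)
  have ww: "w \<bullet> w = (\<Sum>k<n. w $ k * w $ k)" using w by (simp add: scalar_prod_def lessThan_atLeast0)
  show ?thesis
  proof (cases "w \<bullet> w = 0")
    case True
    then have "w = 0\<^sub>v n" using conjugate_square_eq_0_vec[OF w] by simp
    then have "u = unit_vec n 0" using u by (intro eq_vecI) (auto simp: w_def vec_eq_iff)
    moreover have "householder n u = 1\<^sub>m n" unfolding H c_def True by (rule eq_matI) auto
    ultimately show ?thesis by simp
  next
    case False
    have "w \<bullet> w = (\<Sum>k<n. u $ k * u $ k) - 2 * (\<Sum>k<n. (if k = 0 then 1 else 0) * u $ k)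
        + (\<Sum>k<n. (if k = 0 then 1 else 0) * (if k = 0 then 1 else (0::real)))"
      unfolding ww using u by (simp add: w_def algebra_simps sum.distrib sum_subtractf sum_distrib_left)
    also have "\<dots> = 2 - 2 * u $ 0"
      using uu u sum_delta_right[OF n, of "\<lambda>k. u $ k"] sum_delta_right[OF n, of "\<lambda>k. if k = 0 then 1 else 0"]
      by (simp add: scalar_prod_def lessThan_atLeast0)
    finally have "c * w $ 0 = -1" using False u n by (simp add: c_def w_def field_simps)
    show ?thesis
    proof (rule eq_vecI)
      fix i assume "i < dim_vec u"
      then have i: "i < n" using u by simp
      have "(householder n u *\<^sub>v unit_vec n 0) $ i
          = (\<Sum>k<n. ((if i = k then 1 else 0) - c * (w $ i * w $ k)) * (if k = 0 then 1 else 0))"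
        unfolding H using i by (simp add: mult_mat_vec_def scalar_prod_def lessThan_atLeast0 row_def)
      also have "\<dots> = (if i = 0 then 1 else 0) - c * w $ 0 * w $ i"
        using sum_delta_right[OF n, of "\<lambda>k. (if i = k then 1 else 0) - c * (w $ i * w $ k)"]
        by (simp add: algebra_simps)
      also have "\<dots> = u $ i" using i u \<open>c * w $ 0 = -1\<close> by (simp add: w_def)
      finally show "(householder n u *\<^sub>v unit_vec n 0) $ i = u $ i" .
    qed (use u in \<open>simp add: H\<close>)
  qed
qed

lemma householder_conj_eigenvector:
  fixes A :: "real mat"
  assumes A: "A \<in> carrier_mat n n" and symA: "transpose_mat A = A"
    and u: "u \<in> carrier_vec n" "u \<bullet> u = 1" and n: "n > 0" and Au: "A *\<^sub>v u = r \<cdot>\<^sub>v u"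
  defines "H \<equiv> householder n u"
  shows "transpose_mat (H * A * H) = H * A * H"
    and "\<And>i. i < n \<Longrightarrow> (H * A * H) $$ (i, 0) = (if i = 0 then r else 0)"
proof -
  have H: "H \<in> carrier_mat n n" and HT: "transpose_mat H = H" and HH: "H * H = 1\<^sub>m n"
    and He: "H *\<^sub>v unit_vec n 0 = u"
    using householder_carrier transpose_householder householder_involution[OF u(1)]
      householder_unit_vec[OF u(1) n u(2)] by (auto simp: H_def)
  have HA: "H * A \<in> carrier_mat n n" using H A by simp
  have e0: "unit_vec n 0 \<in> carrier_vec n" by simp
  have "transpose_mat (H * A * H) = transpose_mat H * (transpose_mat A * transpose_mat H)"
    using transpose_mult[OF HA H] transpose_mult[OF H A] by simp
  also have "\<dots> = H * A * H" unfolding HT symA using H A by (simp add: assoc_mult_mat[of _ n n])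
  finally show "transpose_mat (H * A * H) = H * A * H" .
  have Hu: "H *\<^sub>v u = unit_vec n 0"
    unfolding He[symmetric] using assoc_mult_mat_vec[OF H H e0] HH by simp
  have "(H * A * H) *\<^sub>v unit_vec n 0 = H *\<^sub>v (A *\<^sub>v u)"
    using assoc_mult_mat_vec[OF HA H e0] assoc_mult_mat_vec[OF H A] He u H by simp
  also have "\<dots> = r \<cdot>\<^sub>v unit_vec n 0" using Au mult_mat_vec[OF H u(1)] Hu by simp
  finally have col0: "(H * A * H) *\<^sub>v unit_vec n 0 = r \<cdot>\<^sub>v unit_vec n 0" .
  fix i assume i: "i < n"
  have "((H * A * H) *\<^sub>v unit_vec n 0) $ i = (H * A * H) $$ (i, 0)"
    using H A i n by (simp add: mult_mat_vec_def)
  then show "(H * A * H) $$ (i, 0) = (if i = 0 then r else 0)" using col0 i by auto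
qed

lemma orthogonal_conj_block_diag:
  fixes A1 A4 P4 :: "real mat"
  assumes A1: "A1 \<in> carrier_mat 1 1" and A4: "A4 \<in> carrier_mat m m"
    and P4: "P4 \<in> carrier_mat m m" "transpose_mat P4 * P4 = 1\<^sub>m m"
  defines "F \<equiv> four_block_mat (1\<^sub>m 1) (0\<^sub>m 1 m) (0\<^sub>m m 1) P4"
  shows "F \<in> carrier_mat (1 + m) (1 + m)" and "transpose_mat F * F = 1\<^sub>m (1 + m)"
    and "transpose_mat F * four_block_mat A1 (0\<^sub>m 1 m) (0\<^sub>m m 1) A4 * F
      = four_block_mat A1 (0\<^sub>m 1 m) (0\<^sub>m m 1) (transpose_mat P4 * A4 * P4)"
proof -
  have c11: "1\<^sub>m 1 \<in> carrier_mat 1 1" and z1m: "0\<^sub>m 1 m \<in> carrier_mat 1 m"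
    and zm1: "0\<^sub>m m 1 \<in> carrier_mat m 1" and P4T: "transpose_mat P4 \<in> carrier_mat m m"
    using P4 by auto
  have FT: "transpose_mat F = four_block_mat (1\<^sub>m 1) (0\<^sub>m 1 m) (0\<^sub>m m 1) (transpose_mat P4)"
    unfolding F_def by (subst transpose_four_block_mat) (use P4 in auto)
  show "F \<in> carrier_mat (1 + m) (1 + m)" unfolding F_def using P4 by auto
  show "transpose_mat F * F = 1\<^sub>m (1 + m)" unfolding FT unfolding F_def
    by (subst mult_four_block_mat[OF c11 z1m zm1 P4T c11 z1m zm1 P4(1)]) (use P4 in auto)
  have "transpose_mat F * four_block_mat A1 (0\<^sub>m 1 m) (0\<^sub>m m 1) A4
      = four_block_mat A1 (0\<^sub>m 1 m) (0\<^sub>m m 1) (transpose_mat P4 * A4)" unfolding FT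
    by (subst mult_four_block_mat[OF c11 z1m zm1 P4T A1 z1m zm1 A4]) (use P4 A1 A4 in auto)
  also have "\<dots> * F = four_block_mat A1 (0\<^sub>m 1 m) (0\<^sub>m m 1) (transpose_mat P4 * A4 * P4)"
    unfolding F_def using P4T A4
    by (subst mult_four_block_mat[OF A1 z1m zm1 _ c11 z1m zm1 P4(1)]) (use P4 A1 A4 in auto)
  finally show "transpose_mat F * four_block_mat A1 (0\<^sub>m 1 m) (0\<^sub>m m 1) A4 * F
      = four_block_mat A1 (0\<^sub>m 1 m) (0\<^sub>m m 1) (transpose_mat P4 * A4 * P4)" .
qed

lemma diagonal_four_block_mat:
  assumes "A1 \<in> carrier_mat 1 1" "D \<in> carrier_mat m m" "diagonal_mat D"
  shows "diagonal_mat (four_block_mat A1 (0\<^sub>m 1 m) (0\<^sub>m m 1) D)"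
  using assms unfolding diagonal_mat_def by (auto simp: index_mat_four_block)

text \<open>One step of the spectral theorem: conjugating with the reflection that maps the first unit
  vector to an eigenvector splits off a 1 by 1 block.\<close>
lemma symmetric_deflation:
  fixes A :: "real mat"
  assumes A: "A \<in> carrier_mat (Suc m) (Suc m)"
    and sym: "\<And>i j. i < Suc m \<Longrightarrow> j < Suc m \<Longrightarrow> A $$ (i,j) = A $$ (j,i)"
  shows "\<exists>H A1 A4. H \<in> carrier_mat (Suc m) (Suc m) \<and> transpose_mat H * H = 1\<^sub>m (Suc m) \<and>
    A1 \<in> carrier_mat 1 1 \<and> A4 \<in> carrier_mat m m \<and> (\<forall>i<m. \<forall>j<m. A4 $$ (i,j) = A4 $$ (j,i)) \<and>
    transpose_mat H * A * H = four_block_mat A1 (0\<^sub>m 1 m) (0\<^sub>m m 1) A4"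
proof -
  have symA: "transpose_mat A = A" using A sym by (intro eq_matI) auto
  obtain r v where v: "v \<in> carrier_vec (Suc m)" "v \<noteq> 0\<^sub>v (Suc m)" "A *\<^sub>v v = r \<cdot>\<^sub>v v"
    using symmetric_real_eigenvector[OF A sym] by blast
  define u where "u = (1 / sqrt (v \<bullet> v)) \<cdot>\<^sub>v v"
  have "v \<bullet> v > 0" using conjugate_square_greater_0_vec[OF v(1)] v(2) by simp
  then have u: "u \<in> carrier_vec (Suc m)" "u \<bullet> u = 1"
    using v(1) by (simp_all add: u_def field_simps real_sqrt_mult[symmetric])
  have Au: "A *\<^sub>v u = r \<cdot>\<^sub>v u"
    unfolding u_def using mult_mat_vec[OF A v(1)] v(3) v(1) by (simp add: smult_smult_assoc mult.commute)
  define H where "H = householder (Suc m) u"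
  have H: "H \<in> carrier_mat (Suc m) (Suc m)" and HT: "transpose_mat H = H" and HH: "H * H = 1\<^sub>m (Suc m)"
    using householder_carrier transpose_householder householder_involution[OF u(1)] by (auto simp: H_def)
  define A' where "A' = H * A * H"
  have A': "A' \<in> carrier_mat (1 + m) (1 + m)" using H A by (simp add: A'_def)
  note A'_props = householder_conj_eigenvector[OF A symA u _ Au, folded H_def]
  have A'sym: "A' $$ (i,j) = A' $$ (j,i)" if "i < Suc m" "j < Suc m" for i j
  proof -
    have "A' $$ (i,j) = transpose_mat A' $$ (j,i)" using that A' by simp
    then show ?thesis using A'_props(1) by (simp add: A'_def)
  qed
  obtain A1 A2 A3 A4 where sb: "split_block A' 1 1 = (A1, A2, A3, A4)"
    by (cases "split_block A' 1 1") auto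
  note blocks = split_block[OF sb carrier_matD[OF A']]
  have "A2 = 0\<^sub>m 1 m" "A3 = 0\<^sub>m m 1"
    using sb A' A'sym[of 0] A'_props(2)[folded A'_def] by (auto simp: split_block_def intro!: eq_matI)
  then have "A' = four_block_mat A1 (0\<^sub>m 1 m) (0\<^sub>m m 1) A4" using blocks(5) by simp
  moreover have "A4 $$ (i,j) = A4 $$ (j,i)" if "i < m" "j < m" for i j
  proof -
    have "A4 $$ (i,j) = A' $$ (Suc i, Suc j)" "A4 $$ (j,i) = A' $$ (Suc j, Suc i)"
      using sb A' that by (auto simp: split_block_def)
    then show ?thesis using A'sym[of "Suc i" "Suc j"] that by simp
  qed
  ultimately have "transpose_mat H * A * H = four_block_mat A1 (0\<^sub>m 1 m) (0\<^sub>m m 1) A4"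
    "\<forall>i<m. \<forall>j<m. A4 $$ (i,j) = A4 $$ (j,i)" unfolding A'_def HT by auto
  then show ?thesis using H HH HT blocks(1,4)
    by (intro exI[of _ H] exI[of _ A1] exI[of _ A4]) simp
qed

lemma symmetric_orthogonal_diagonalization:
  fixes A :: "real mat"
  assumes "A \<in> carrier_mat n n" "\<And>i j. i < n \<Longrightarrow> j < n \<Longrightarrow> A $$ (i,j) = A $$ (j,i)"
  shows "\<exists>P \<in> carrier_mat n n. transpose_mat P * P = 1\<^sub>m n \<and> diagonal_mat (transpose_mat P * A * P)"
  using assms
proof (induction n arbitrary: A)
  case 0
  show ?case by (rule bexI[of _ "1\<^sub>m 0"]) (auto simp: diagonal_mat_def)
next
  case (Suc m)
  note A = Suc.prems(1)
  obtain H A1 A4 where H: "H \<in> carrier_mat (Suc m) (Suc m)" "transpose_mat H * H = 1\<^sub>m (Suc m)"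
    and A1: "A1 \<in> carrier_mat 1 1" and A4: "A4 \<in> carrier_mat m m"
    and A4sym: "\<forall>i<m. \<forall>j<m. A4 $$ (i,j) = A4 $$ (j,i)"
    and HAH: "transpose_mat H * A * H = four_block_mat A1 (0\<^sub>m 1 m) (0\<^sub>m m 1) A4"
    using symmetric_deflation[OF Suc.prems] by blast
  obtain P4 where P4: "P4 \<in> carrier_mat m m" "transpose_mat P4 * P4 = 1\<^sub>m m"
    "diagonal_mat (transpose_mat P4 * A4 * P4)"
    using Suc.IH[OF A4] A4sym by blast
  define F where "F = four_block_mat (1\<^sub>m 1) (0\<^sub>m 1 m) (0\<^sub>m m 1) P4"
  note F_props = orthogonal_conj_block_diag[OF A1 A4 P4(1,2), folded F_def]
  have F: "F \<in> carrier_mat (Suc m) (Suc m)" and FT: "transpose_mat F \<in> carrier_mat (Suc m) (Suc m)"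
    and HT: "transpose_mat H \<in> carrier_mat (Suc m) (Suc m)" using F_props(1) H(1) by auto
  have HF: "H * F \<in> carrier_mat (Suc m) (Suc m)" using H F by simp
  have PT: "transpose_mat (H * F) = transpose_mat F * transpose_mat H"
    using transpose_mult[OF H(1) F] by simp
  have "transpose_mat (H * F) * (H * F) = transpose_mat F * ((transpose_mat H * H) * F)"
    unfolding PT using assoc_mult_mat[OF FT HT HF] assoc_mult_mat[OF HT H(1) F] by simp
  then have "transpose_mat (H * F) * (H * F) = 1\<^sub>m (Suc m)" using F_props(2) F by (simp add: H(2))
  moreover have "transpose_mat (H * F) * A * (H * F)
      = transpose_mat F * (transpose_mat H * A * H) * F"
  proof -
    have HA: "transpose_mat H * A \<in> carrier_mat (Suc m) (Suc m)" using HT A by simp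
    have AHF: "A * (H * F) \<in> carrier_mat (Suc m) (Suc m)" using A HF by simp
    have "transpose_mat (H * F) * A * (H * F) = transpose_mat F * (transpose_mat H * (A * (H * F)))"
      unfolding PT using assoc_mult_mat[OF FT HT A] assoc_mult_mat[OF FT _ HF, of "transpose_mat H * A"]
        assoc_mult_mat[OF HT A HF] HA by simp
    also have "transpose_mat H * (A * (H * F)) = transpose_mat H * A * H * F"
      using assoc_mult_mat[OF HT A HF] assoc_mult_mat[OF HA H(1) F] by simp
    finally show ?thesis using assoc_mult_mat[OF FT _ F, of "transpose_mat H * A * H"] HA H(1) by simp
  qed
  then have "diagonal_mat (transpose_mat (H * F) * A * (H * F))"
    using F_props(3) diagonal_four_block_mat[OF A1 _ P4(3)] P4(1) A4 unfolding HAH by simp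
  ultimately show ?case using HF by blast
qed

lemma order_prod_linear_factors:
  fixes xs :: "real list"
  shows "order a (\<Prod>x\<leftarrow>xs. [:- x, 1:]) = length (filter (\<lambda>x. x = a) xs)"
proof (induction xs)
  case (Cons x xs)
  have nz: "(\<Prod>x\<leftarrow>xs. [:- x, 1:]) \<noteq> (0 :: real poly)"
    using prod_list_zero_iff[of "map (\<lambda>x. [:- x, 1:]) xs"] by auto
  have "order a ([:- x, 1:] * (\<Prod>x\<leftarrow>xs. [:- x, 1:]))
      = order a [:- x, 1:] + order a (\<Prod>x\<leftarrow>xs. [:- x, 1:])"
    by (rule order_mult, rule no_zero_divisors) (auto simp: nz)
  then show ?case using Cons by (simp add: order_linear')
qed (simp add: order_0I)

lemma poly_prod_linear_factors_eq_0: "poly (\<Prod>x\<leftarrow>xs. [:- x, 1:]) a = 0 \<longleftrightarrow> a \<in> set (xs :: real list)"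
  by (induction xs) auto

lemma neg_inertia_linear_factors:
  fixes d :: "nat \<Rightarrow> real"
  assumes cp: "char_poly A = (\<Prod>x\<leftarrow>map d [0..<n]. [:- x, 1:])"
  shows "neg_inertia A = card {i. i < n \<and> d i < 0}"
proof -
  define R where "R = {a. a < 0 \<and> poly (char_poly A) a = 0}"
  have R: "R = d ` {i. i < n \<and> d i < 0}" unfolding R_def cp poly_prod_linear_factors_eq_0 by auto
  have mult: "order a (char_poly A) = card {i. i < n \<and> d i = a}" for a
  proof -
    have "{i. i < n \<and> map d [0..<n] ! i = a} = {i. i < n \<and> d i = a}" by auto
    then show ?thesis unfolding cp order_prod_linear_factors length_filter_conv_card by simp
  qed
  have "neg_inertia A = (\<Sum>a\<in>R. card {i. i < n \<and> d i = a})"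
    unfolding neg_inertia_def R_def[symmetric] mult ..
  also have "\<dots> = card (\<Union>a\<in>R. {i. i < n \<and> d i = a})"
    by (rule card_UN_disjoint[symmetric]) (auto simp: R)
  also have "(\<Union>a\<in>R. {i. i < n \<and> d i = a}) = {i. i < n \<and> d i < 0}" unfolding R by auto
  finally show ?thesis .
qed

lemma neg_inertia_orthogonal_diagonal:
  fixes A P :: "real mat"
  assumes A: "A \<in> carrier_mat n n" and P: "P \<in> carrier_mat n n" "transpose_mat P * P = 1\<^sub>m n"
    and diag: "diagonal_mat (transpose_mat P * A * P)"
  shows "neg_inertia A = card {i. i < n \<and> (transpose_mat P * A * P) $$ (i,i) < 0}"
proof -
  define D where "D = transpose_mat P * A * P"
  have PT: "transpose_mat P \<in> carrier_mat n n" using P by simp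
  have D: "D \<in> carrier_mat n n" using P A by (simp add: D_def)
  have "similar_mat_wit D A (transpose_mat P) P"
    using P PT A mat_mult_left_right_inverse[OF PT P(1) P(2)] by (auto simp: similar_mat_wit_def D_def)
  then have "similar_mat A D" using similar_mat_sym unfolding similar_mat_def by blast
  then have "char_poly A = char_poly D" by (rule char_poly_similar)
  also have "\<dots> = (\<Prod>x\<leftarrow>diag_mat D. [:- x, 1:])"
    using D diag unfolding D_def[symmetric]
    by (intro char_poly_upper_triangular) (auto simp: upper_triangular_def diagonal_mat_def)
  also have "diag_mat D = map (\<lambda>i. D $$ (i,i)) [0..<n]" using D by (simp add: diag_mat_def)
  finally show ?thesis unfolding D_def by (rule neg_inertia_linear_factors)
qed

definition quad_form :: "real mat \<Rightarrow> nat \<Rightarrow> (nat \<Rightarrow> real) \<Rightarrow> real" where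
  "quad_form A n u = (\<Sum>x<n. \<Sum>y<n. A $$ (x,y) * u x * u y)"

lemma quad_form_sum_squares:
  assumes "\<And>x y. x < n \<Longrightarrow> y < n \<Longrightarrow> A $$ (x,y) = (\<Sum>i<n. d i * p i x * p i y)"
  shows "quad_form A n u = (\<Sum>i<n. d i * (\<Sum>x<n. p i x * u x)\<^sup>2)"
proof -
  have "quad_form A n u = (\<Sum>x<n. \<Sum>y<n. \<Sum>i<n. d i * (p i x * u x) * (p i y * u y))"
    unfolding quad_form_def using assms
    by (intro sum.cong refl) (simp add: sum_distrib_left sum_distrib_right mult_ac)
  also have "\<dots> = (\<Sum>x<n. \<Sum>i<n. \<Sum>y<n. d i * (p i x * u x) * (p i y * u y))"
    by (intro sum.cong refl sum.swap)
  also have "\<dots> = (\<Sum>i<n. \<Sum>x<n. \<Sum>y<n. d i * (p i x * u x) * (p i y * u y))"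
    by (rule sum.swap)
  also have "\<dots> = (\<Sum>i<n. d i * (\<Sum>x<n. p i x * u x)\<^sup>2)"
    by (intro sum.cong refl) (simp add: power2_eq_square sum_distrib_left sum_distrib_right mult_ac)
  finally show ?thesis .
qed

lemma orthogonal_diagonal_entries:
  fixes A P :: "real mat"
  assumes A: "A \<in> carrier_mat n n" and P: "P \<in> carrier_mat n n" "transpose_mat P * P = 1\<^sub>m n"
    and diag: "diagonal_mat (transpose_mat P * A * P)" and xy: "x < n" "y < n"
  shows "A $$ (x,y) = (\<Sum>i<n. (transpose_mat P * A * P) $$ (i,i) * P $$ (x,i) * P $$ (y,i))"
proof -
  define D where "D = transpose_mat P * A * P"
  have PT: "transpose_mat P \<in> carrier_mat n n" using P by simp
  have PA: "transpose_mat P * A \<in> carrier_mat n n" using PT A by simp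
  have D: "D \<in> carrier_mat n n" using P A by (simp add: D_def)
  have PPT: "P * transpose_mat P = 1\<^sub>m n" by (rule mat_mult_left_right_inverse[OF PT P])
  have "P * D = (P * transpose_mat P) * A * P"
    unfolding D_def using assoc_mult_mat[OF P(1) PA P(1)] assoc_mult_mat[OF P(1) PT A] by simp
  then have "P * D * transpose_mat P = A * (P * transpose_mat P)"
    using A P(1) PT by (simp add: PPT assoc_mult_mat[of _ n n])
  then have APD: "A = P * D * transpose_mat P" using A by (simp add: PPT)
  have PD: "(P * D) $$ (x,j) = P $$ (x,j) * D $$ (j,j)" if "j < n" for j
  proof -
    have "(P * D) $$ (x,j) = (\<Sum>i<n. P $$ (x,i) * D $$ (i,j))"
      using xy that P D by (simp add: scalar_prod_def lessThan_atLeast0)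
    also have "\<dots> = (\<Sum>i<n. if i = j then P $$ (x,i) * D $$ (i,i) else 0)"
      using diag D that unfolding D_def[symmetric] diagonal_mat_def by (intro sum.cong refl) auto
    finally show ?thesis using that by simp
  qed
  have "A $$ (x,y) = (\<Sum>j<n. (P * D) $$ (x,j) * P $$ (y,j))"
    using xy P D by (subst APD) (simp add: scalar_prod_def lessThan_atLeast0 sum_distrib_left
      sum_distrib_right mult.assoc, subst sum.swap, simp)
  also have "\<dots> = (\<Sum>j<n. D $$ (j,j) * P $$ (x,j) * P $$ (y,j))"
    by (intro sum.cong refl) (simp add: PD)
  finally show ?thesis unfolding D_def .
qed

lemma orthogonal_coords_eq_0:
  fixes P :: "real mat"
  assumes P: "P \<in> carrier_mat n n" "transpose_mat P * P = 1\<^sub>m n"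
    and coords: "\<forall>i<n. (\<Sum>y<n. P $$ (y,i) * u y) = 0" and x: "x < n"
  shows "u x = 0"
proof -
  have PT: "transpose_mat P \<in> carrier_mat n n" using P by simp
  have PPT: "P * transpose_mat P = 1\<^sub>m n" by (rule mat_mult_left_right_inverse[OF PT P])
  have orth: "(\<Sum>i<n. P $$ (x,i) * P $$ (y,i)) = (if x = y then 1 else 0)" if "y < n" for y
    using arg_cong[OF PPT, of "\<lambda>M. M $$ (x,y)"] x that P
    by (simp add: scalar_prod_def lessThan_atLeast0 mult.commute)
  have "u x = (\<Sum>y<n. (if x = y then 1 else 0) * u y)" using x by (simp add: sum_delta_left)
  also have "\<dots> = (\<Sum>y<n. (\<Sum>i<n. P $$ (x,i) * P $$ (y,i)) * u y)"
    using orth by (intro sum.cong refl) auto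
  also have "\<dots> = (\<Sum>y<n. \<Sum>i<n. P $$ (x,i) * (P $$ (y,i) * u y))"
    by (simp add: sum_distrib_right mult.assoc)
  also have "\<dots> = (\<Sum>i<n. P $$ (x,i) * (\<Sum>y<n. P $$ (y,i) * u y))"
    by (subst sum.swap) (simp add: sum_distrib_left)
  also have "\<dots> = 0" using coords by simp
  finally show ?thesis .
qed

lemma spectral_decomposition:
  fixes A :: "real mat"
  assumes A: "A \<in> carrier_mat n n" and sym: "\<And>i j. i < n \<Longrightarrow> j < n \<Longrightarrow> A $$ (i,j) = A $$ (j,i)"
  shows "\<exists>(d :: nat \<Rightarrow> real) (p :: nat \<Rightarrow> nat \<Rightarrow> real).
    (\<forall>u. quad_form A n u = (\<Sum>i<n. d i * (\<Sum>x<n. p i x * u x)\<^sup>2)) \<and>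
    (\<forall>u. (\<forall>i<n. (\<Sum>y<n. p i y * u y) = 0) \<longrightarrow> (\<forall>x<n. u x = 0)) \<and>
    neg_inertia A = card {i. i < n \<and> d i < 0}"
proof -
  obtain P where P: "P \<in> carrier_mat n n" "transpose_mat P * P = 1\<^sub>m n"
    and diag: "diagonal_mat (transpose_mat P * A * P)"
    using symmetric_orthogonal_diagonalization[OF A sym] by blast
  have "quad_form A n u = (\<Sum>i<n. (transpose_mat P * A * P) $$ (i,i) * (\<Sum>x<n. P $$ (x,i) * u x)\<^sup>2)"
    for u by (rule quad_form_sum_squares) (rule orthogonal_diagonal_entries[OF A P diag])
  moreover have "u x = 0" if "\<forall>i<n. (\<Sum>y<n. P $$ (y,i) * u y) = 0" "x < n" for u x
    by (rule orthogonal_coords_eq_0[OF P that])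
  ultimately show ?thesis using neg_inertia_orthogonal_diagonal[OF A P diag]
    by (intro exI[of _ "\<lambda>i. (transpose_mat P * A * P) $$ (i,i)"] exI[of _ "\<lambda>i x. P $$ (x,i)"]) blast
qed

lemma homogeneous_system_nontrivial_solution:
  fixes c :: "'k \<Rightarrow> 'i \<Rightarrow> real"
  assumes "finite K" "finite I" "card K < card I"
  shows "\<exists>\<beta>. (\<exists>i\<in>I. \<beta> i \<noteq> 0) \<and> (\<forall>k\<in>K. (\<Sum>i\<in>I. c k i * \<beta> i) = 0)"
  using assms
proof (induction K arbitrary: I c rule: finite_induct)
  case empty
  then obtain i0 where "i0 \<in> I" by (metis all_not_in_conv card.empty less_irrefl)
  then show ?case by (intro exI[of _ "\<lambda>_. 1"]) auto
next
  case (insert k0 K)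
  show ?case
  proof (cases "\<forall>i\<in>I. c k0 i = 0")
    case True
    have "card K < card I" using insert.prems(2) insert.hyps by simp
    then obtain \<beta> where "\<exists>i\<in>I. \<beta> i \<noteq> 0" "\<forall>k\<in>K. (\<Sum>i\<in>I. c k i * \<beta> i) = 0"
      using insert.IH[OF insert.prems(1) \<open>card K < card I\<close>, of c] by blast
    then show ?thesis using True by (intro exI[of _ \<beta>]) auto
  next
    case False
    then obtain i0 where i0: "i0 \<in> I" "c k0 i0 \<noteq> 0" by auto
    define I' where "I' = I - {i0}"
    \<comment> \<open>Gaussian elimination of the unknown i0 using the equation k0\<close>
    define c' where "c' k i = c k i - c k i0 * c k0 i / c k0 i0" for k i
    have I': "finite I'" "card K < card I'" using insert.prems insert.hyps i0 by (simp_all add: I'_def)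
    obtain \<beta>' where b': "\<exists>i\<in>I'. \<beta>' i \<noteq> 0" "\<forall>k\<in>K. (\<Sum>i\<in>I'. c' k i * \<beta>' i) = 0"
      using insert.IH[OF I'] by blast
    define \<beta> where "\<beta> i = (if i = i0 then - (\<Sum>j\<in>I'. c k0 j * \<beta>' j) / c k0 i0 else \<beta>' i)" for i
    have sumI: "(\<Sum>i\<in>I. f i) = f i0 + (\<Sum>i\<in>I'. f i)" for f :: "'i \<Rightarrow> real"
      using insert.prems(1) i0(1) unfolding I'_def by (simp add: sum.remove)
    have sumI': "(\<Sum>i\<in>I'. g i * \<beta> i) = (\<Sum>i\<in>I'. g i * \<beta>' i)" for g :: "'i \<Rightarrow> real"
      by (intro sum.cong refl) (auto simp: \<beta>_def I'_def)
    have "(\<Sum>i\<in>I. c k i * \<beta> i) = 0" if k: "k \<in> insert k0 K" for k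
    proof (cases "k = k0")
      case True
      show ?thesis unfolding True sumI sumI' using i0(2) by (simp add: \<beta>_def)
    next
      case False
      then have "0 = (\<Sum>i\<in>I'. c' k i * \<beta>' i)" using b'(2) k by simp
      also have "\<dots> = (\<Sum>i\<in>I'. c k i * \<beta>' i) - c k i0 / c k0 i0 * (\<Sum>i\<in>I'. c k0 i * \<beta>' i)"
        unfolding c'_def by (simp add: algebra_simps sum_subtractf sum_distrib_left)
      also have "\<dots> = (\<Sum>i\<in>I. c k i * \<beta> i)" unfolding sumI sumI' using i0(2)
        by (simp add: \<beta>_def field_simps)
      finally show ?thesis by simp
    qed
    moreover have "\<exists>i\<in>I. \<beta> i \<noteq> 0" using b'(1) by (auto simp: \<beta>_def I'_def)
    ultimately show ?thesis by blast
  qed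
qed

lemma exists_combination_orthogonal:
  fixes p :: "'k \<Rightarrow> nat \<Rightarrow> real" and v :: "'i \<Rightarrow> nat \<Rightarrow> real"
  assumes "finite I" "finite K" "card K < card I"
  shows "\<exists>\<beta>. (\<exists>i\<in>I. \<beta> i \<noteq> 0) \<and> (\<forall>k\<in>K. (\<Sum>x<n. p k x * (\<Sum>i\<in>I. \<beta> i * v i x)) = 0)"
proof -
  have swap: "(\<Sum>x<n. p k x * (\<Sum>i\<in>I. \<beta> i * v i x)) = (\<Sum>i\<in>I. (\<Sum>x<n. p k x * v i x) * \<beta> i)"
    for k \<beta>
  proof -
    have "(\<Sum>x<n. p k x * (\<Sum>i\<in>I. \<beta> i * v i x)) = (\<Sum>x<n. \<Sum>i\<in>I. p k x * v i x * \<beta> i)"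
      by (simp add: sum_distrib_left mult_ac)
    also have "\<dots> = (\<Sum>i\<in>I. \<Sum>x<n. p k x * v i x * \<beta> i)" by (rule sum.swap)
    finally show ?thesis by (simp add: sum_distrib_right)
  qed
  show ?thesis unfolding swap
    by (rule homogeneous_system_nontrivial_solution[OF assms(2,1,3)])
qed

lemma neg_inertia_ge_card_neg_definite:
  fixes A :: "real mat" and v :: "'i \<Rightarrow> nat \<Rightarrow> real"
  assumes A: "A \<in> carrier_mat n n" and sym: "\<And>i j. i < n \<Longrightarrow> j < n \<Longrightarrow> A $$ (i,j) = A $$ (j,i)"
    and I: "finite I"
    and neg: "\<And>\<beta>. \<exists>i\<in>I. \<beta> i \<noteq> 0 \<Longrightarrow> quad_form A n (\<lambda>x. \<Sum>i\<in>I. \<beta> i * v i x) < 0"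
  shows "card I \<le> neg_inertia A"
proof (rule ccontr)
  obtain d p where qf: "\<forall>u. quad_form A n u = (\<Sum>i<n. d i * (\<Sum>x<n. p i x * u x)\<^sup>2)"
    and ni: "neg_inertia A = card {i. i < n \<and> d i < 0}"
    using spectral_decomposition[OF A sym] by blast
  define K where "K = {i. i < n \<and> d i < 0}"
  assume "\<not> card I \<le> neg_inertia A"
  then have lt: "card K < card I" using ni by (simp add: K_def)
  obtain \<beta> where \<beta>: "\<exists>i\<in>I. \<beta> i \<noteq> 0"
    and orth: "\<forall>k\<in>K. (\<Sum>x<n. p k x * (\<Sum>i\<in>I. \<beta> i * v i x)) = 0"
    using exists_combination_orthogonal[OF I _ lt, where p = p and v = v and n = n]
    by (auto simp: K_def)
  have "d i * (\<Sum>x<n. p i x * (\<Sum>i\<in>I. \<beta> i * v i x))\<^sup>2 \<ge> 0" if "i < n" for i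
    using orth that by (cases "d i < 0") (auto simp: K_def)
  then have "quad_form A n (\<lambda>x. \<Sum>i\<in>I. \<beta> i * v i x) \<ge> 0"
    unfolding qf[rule_format] by (intro sum_nonneg) auto
  with neg[OF \<beta>] show False by simp
qed

lemma neg_inertia_le_card_psd:
  fixes A :: "real mat" and w :: "'j \<Rightarrow> nat \<Rightarrow> real"
  assumes A: "A \<in> carrier_mat n n" and sym: "\<And>i j. i < n \<Longrightarrow> j < n \<Longrightarrow> A $$ (i,j) = A $$ (j,i)"
    and J: "finite J"
    and indep: "\<And>\<gamma>. \<forall>x<n. (\<Sum>j\<in>J. \<gamma> j * w j x) = 0 \<Longrightarrow> \<forall>j\<in>J. \<gamma> j = 0"
    and psd: "\<And>\<gamma>. quad_form A n (\<lambda>x. \<Sum>j\<in>J. \<gamma> j * w j x) \<ge> 0"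
  shows "neg_inertia A + card J \<le> n"
proof (rule ccontr)
  obtain d p where qf: "\<forall>u. quad_form A n u = (\<Sum>i<n. d i * (\<Sum>x<n. p i x * u x)\<^sup>2)"
    and complete: "\<forall>u. (\<forall>i<n. (\<Sum>y<n. p i y * u y) = 0) \<longrightarrow> (\<forall>x<n. u x = 0)"
    and ni: "neg_inertia A = card {i. i < n \<and> d i < 0}"
    using spectral_decomposition[OF A sym] by blast
  define K where "K = {i. i < n \<and> \<not> d i < 0}"
  have "card K + card {i. i < n \<and> d i < 0} = card (K \<union> {i. i < n \<and> d i < 0})"
    by (rule card_Un_disjoint[symmetric]) (auto simp: K_def)
  also have "K \<union> {i. i < n \<and> d i < 0} = {..<n}" by (auto simp: K_def)
  finally have "card K + card {i. i < n \<and> d i < 0} = n" by simp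
  moreover assume "\<not> neg_inertia A + card J \<le> n"
  ultimately have lt: "card K < card J" using ni by simp
  obtain \<gamma> where \<gamma>: "\<exists>j\<in>J. \<gamma> j \<noteq> 0"
    and orth: "\<forall>k\<in>K. (\<Sum>x<n. p k x * (\<Sum>j\<in>J. \<gamma> j * w j x)) = 0"
    using exists_combination_orthogonal[OF J _ lt, where p = p and v = w and n = n]
    by (auto simp: K_def)
  define u where "u x = (\<Sum>j\<in>J. \<gamma> j * w j x)" for x
  have nonpos: "d i * (\<Sum>x<n. p i x * u x)\<^sup>2 \<le> 0" if "i < n" for i
    using orth that unfolding u_def by (cases "d i < 0") (auto simp: K_def mult_nonpos_nonneg)
  obtain x where x: "x < n" "u x \<noteq> 0" using indep[of \<gamma>] \<gamma> unfolding u_def by auto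
  have "\<exists>i<n. (\<Sum>y<n. p i y * u y) \<noteq> 0"
  proof (rule ccontr)
    assume "\<not> ?thesis"
    then have "u x = 0" using complete[rule_format, of u x] x(1) by auto
    with x(2) show False by simp
  qed
  then obtain i0 where i0: "i0 < n" "(\<Sum>y<n. p i0 y * u y) \<noteq> 0" by blast
  then have "d i0 < 0" using orth unfolding u_def K_def by auto
  have "quad_form A n u < (\<Sum>i<n. 0)" unfolding qf[rule_format]
  proof (rule sum_strict_mono_ex1)
    show "\<exists>i\<in>{..<n}. d i * (\<Sum>x<n. p i x * u x)\<^sup>2 < 0"
      using i0 \<open>d i0 < 0\<close> by (intro bexI[of _ i0]) (auto simp: mult_neg_pos)
  qed (use nonpos in auto)
  with psd[of \<gamma>] show False unfolding u_def by simp
qed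

section \<open>Walks and distances\<close>

lemma is_walk_singleton: "x < n \<Longrightarrow> is_walk E n [x]"
  by (simp add: is_walk_def)

lemma is_walk_drop: "is_walk E n xs \<Longrightarrow> i < length xs \<Longrightarrow> is_walk E n (drop i xs)"
  unfolding is_walk_def by (auto dest: in_set_dropD simp: add.commute add.left_commute)

lemma is_walk_append:
  assumes "is_walk E n xs" "is_walk E n ys" "E (last xs) (hd ys)"
  shows "is_walk E n (xs @ ys)"
  unfolding is_walk_def
proof (intro conjI allI impI)
  show "xs @ ys \<noteq> []" "set (xs @ ys) \<subseteq> {..<n}" using assms by (auto simp: is_walk_def)
  fix i assume i: "i + 1 < length (xs @ ys)"
  have xs: "xs \<noteq> []" and ys: "ys \<noteq> []" using assms by (auto simp: is_walk_def)
  consider "i + 1 < length xs" | "i + 1 = length xs" | "i \<ge> length xs" by linarith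
  then show "E ((xs @ ys) ! i) ((xs @ ys) ! (i + 1))"
  proof cases
    case 1
    then show ?thesis using assms(1) by (simp add: nth_append is_walk_def)
  next
    case 2
    then have "i = length xs - 1" by simp
    then have "(xs @ ys) ! i = last xs" using xs 2 by (simp add: nth_append last_conv_nth)
    moreover have "(xs @ ys) ! (i + 1) = hd ys" using 2 ys by (simp add: nth_append hd_conv_nth)
    ultimately show ?thesis using assms(3) by simp
  next
    case 3
    have "E (ys ! (i - length xs)) (ys ! (i - length xs + 1))"
      using assms(2) i 3 unfolding is_walk_def by auto
    moreover have "i + 1 - length xs = i - length xs + 1" using 3 by simp
    ultimately show ?thesis using 3 by (simp add: nth_append)
  qed
qed

lemma is_walk_Cons: "is_walk E n xs \<Longrightarrow> x < n \<Longrightarrow> E x (hd xs) \<Longrightarrow> is_walk E n (x # xs)"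
  using is_walk_append[OF is_walk_singleton] by fastforce

lemma is_walk_rev:
  assumes sym: "\<And>u v. u < n \<Longrightarrow> v < n \<Longrightarrow> E u v \<longleftrightarrow> E v u" and w: "is_walk E n xs"
  shows "is_walk E n (rev xs)"
  unfolding is_walk_def
proof (intro conjI allI impI)
  show "rev xs \<noteq> []" "set (rev xs) \<subseteq> {..<n}" using w by (auto simp: is_walk_def)
  fix i assume i: "i + 1 < length (rev xs)"
  define j where "j = length xs - i - 2"
  have ij: "length xs - Suc i = j + 1" "length xs - Suc (i + 1) = j" "j + 1 < length xs"
    using i by (auto simp: j_def)
  have "E (xs ! j) (xs ! (j + 1))" using w ij(3) by (auto simp: is_walk_def)
  moreover have "xs ! j \<in> set xs" "xs ! (j + 1) \<in> set xs" using ij(3) by auto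
  then have "xs ! j < n" "xs ! (j + 1) < n" using w by (auto simp: is_walk_def)
  ultimately show "E (rev xs ! i) (rev xs ! (i + 1))" using i sym ij by (simp add: rev_nth)
qed

lemma degree_two_neighbours:
  assumes "degree E n v = 2" and p: "p < n" "E v p" and q: "q < n" "E v q" "p \<noteq> q"
    and w: "w < n" "E v w"
  shows "w = p \<or> w = q"
proof -
  have "{p, q} \<subseteq> {w. w < n \<and> E v w}" "card {p, q} = card {w. w < n \<and> E v w}"
    using p q assms(1) by (auto simp: degree_def)
  then have "{p, q} = {w. w < n \<and> E v w}" by (intro card_subset_eq) auto
  then show ?thesis using w by auto
qed

locale connected_simple_graph =
  fixes E :: "nat \<Rightarrow> nat \<Rightarrow> bool" and n :: nat
  assumes sym: "\<And>u v. u < n \<Longrightarrow> v < n \<Longrightarrow> E u v \<longleftrightarrow> E v u"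
    and irrefl: "\<And>v. v < n \<Longrightarrow> \<not> E v v"
    and conn: "connected_graph E n"
begin

abbreviation d where "d \<equiv> graph_dist E n"

lemma graph_dist_walk:
  assumes "x < n" "y < n"
  shows "\<exists>xs. is_walk E n xs \<and> hd xs = x \<and> last xs = y \<and> length xs = d x y + 1"
proof -
  obtain xs where xs: "is_walk E n xs" "hd xs = x" "last xs = y"
    using conn assms unfolding connected_graph_def by blast
  then have "\<exists>k xs. is_walk E n xs \<and> hd xs = x \<and> last xs = y \<and> length xs = k + 1"
    by (intro exI[of _ "length xs - 1"] exI[of _ xs]) (auto simp: is_walk_def)
  then show ?thesis unfolding graph_dist_def by (rule LeastI_ex)
qed

lemma graph_dist_le_walk:
  assumes "is_walk E n xs" "hd xs = x" "last xs = y"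
  shows "d x y + 1 \<le> length xs"
proof -
  have "xs \<noteq> []" using assms by (simp add: is_walk_def)
  moreover have "d x y \<le> length xs - 1" unfolding graph_dist_def
    by (rule Least_le) (use assms \<open>xs \<noteq> []\<close> in auto)
  ultimately show ?thesis by (cases xs) auto
qed

lemma graph_dist_self: "x < n \<Longrightarrow> d x x = 0"
  using graph_dist_le_walk[of "[x]" x x] by (simp add: is_walk_def)

lemma graph_dist_eq_0: assumes "x < n" "y < n" "d x y = 0" shows "x = y"
proof -
  obtain xs where xs: "is_walk E n xs" "hd xs = x" "last xs = y" "length xs = 1"
    using graph_dist_walk[OF assms(1,2)] assms(3) by auto
  then obtain z where "xs = [z]" by (cases xs) auto
  then show ?thesis using xs by simp
qed

lemma graph_dist_edge: assumes "x < n" "y < n" "E x y" shows "d x y = 1"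
proof -
  have "is_walk E n [x, y]" using assms by (auto simp: is_walk_def nth_Cons split: nat.splits)
  then have "d x y \<le> 1" using graph_dist_le_walk[of "[x, y]" x y] by simp
  moreover have "x \<noteq> y" using irrefl assms by auto
  then have "d x y \<noteq> 0" using graph_dist_eq_0 assms by auto
  ultimately show ?thesis by simp
qed

lemma graph_dist_sym: assumes "x < n" "y < n" shows "d x y = d y x"
proof -
  have le: "d v u \<le> d u v" if uv: "u < n" "v < n" for u v
  proof -
    obtain xs where xs: "is_walk E n xs" "hd xs = u" "last xs = v" "length xs = d u v + 1"
      using graph_dist_walk[OF uv] by blast
    have "xs \<noteq> []" using xs by (simp add: is_walk_def)
    then have "d v u + 1 \<le> length (rev xs)"
      using graph_dist_le_walk[OF is_walk_rev[OF sym xs(1)]] xs by (simp add: hd_rev last_rev)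
    then show ?thesis using xs by simp
  qed
  show ?thesis using le[of x y] le[of y x] assms by simp
qed

lemma graph_dist_triangle: assumes "x < n" "y < n" "z < n" shows "d x z \<le> d x y + d y z"
proof -
  obtain xs where xs: "is_walk E n xs" "hd xs = x" "last xs = y" "length xs = d x y + 1"
    using graph_dist_walk assms by blast
  obtain ys where ys: "is_walk E n ys" "hd ys = y" "last ys = z" "length ys = d y z + 1"
    using graph_dist_walk assms by blast
  show ?thesis
  proof (cases "tl ys = []")
    case True
    then have "z = y" using ys by (cases ys) auto
    then show ?thesis using assms by (simp add: graph_dist_self)
  next
    case False
    have tl_walk: "is_walk E n (tl ys)" using is_walk_drop[OF ys(1), of 1] False by (cases ys) auto
    have "E (last xs) (hd (tl ys))" using ys(1) False xs(3) ys(2) unfolding is_walk_def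
      by (cases ys; cases "tl ys") auto
    then have "is_walk E n (xs @ tl ys)" by (rule is_walk_append[OF xs(1) tl_walk])
    then have "d x z + 1 \<le> length (xs @ tl ys)"
      by (rule graph_dist_le_walk) (use False xs ys in \<open>auto simp: last_tl is_walk_def\<close>)
    then show ?thesis using xs ys by simp
  qed
qed

lemma graph_dist_edge_le: "x < n \<Longrightarrow> y < n \<Longrightarrow> z < n \<Longrightarrow> E x y \<Longrightarrow> d x z \<le> d y z + 1"
  using graph_dist_triangle[of x y z] graph_dist_edge[of x y] by simp

lemma graph_dist_cut:
  assumes cut: "\<And>s v. s \<in> S \<Longrightarrow> v < n \<Longrightarrow> v \<notin> S \<Longrightarrow> E s v \<Longrightarrow> v = u"
    and w: "w \<in> S" "w < n" and z: "z \<notin> S" "z < n" and u: "u < n"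
  shows "d u z + 1 \<le> d w z"
proof -
  obtain xs where xs: "is_walk E n xs" "hd xs = w" "last xs = z" "length xs = d w z + 1"
    using graph_dist_walk w z by blast
  have ne: "xs \<noteq> []" using xs by (simp add: is_walk_def)
  have ex: "\<exists>i. i < length xs \<and> xs ! i \<notin> S"
    using xs ne z by (intro exI[of _ "length xs - 1"]) (auto simp: last_conv_nth)
  define i where "i = (LEAST i. i < length xs \<and> xs ! i \<notin> S)"
  have i: "i < length xs" "xs ! i \<notin> S" using LeastI_ex[OF ex] unfolding i_def by auto
  have i0: "i \<noteq> 0" using i xs(2) w ne by (metis hd_conv_nth)
  have prev: "xs ! (i - 1) \<in> S"
  proof (rule ccontr)
    assume "xs ! (i - 1) \<notin> S"
    then have "i \<le> i - 1" unfolding i_def by (intro Least_le) (use i in \<open>auto simp: i_def\<close>)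
    then show False using i0 by simp
  qed
  have "E (xs ! (i - 1)) (xs ! (i - 1 + 1))" using xs(1) i i0 unfolding is_walk_def
    by (metis One_nat_def Suc_pred add.commute less_Suc_eq_0_disj not_less_eq plus_1_eq_Suc)
  then have edge: "E (xs ! (i - 1)) (xs ! i)" using i0 by simp
  have "xs ! i \<in> set xs" using i by simp
  then have "xs ! i < n" using xs(1) by (auto simp: is_walk_def)
  then have xi: "xs ! i = u" using cut[OF prev _ i(2) edge] by simp
  have "d u z + 1 \<le> length (drop i xs)"
    by (rule graph_dist_le_walk[OF is_walk_drop[OF xs(1) i(1)]]) (use i xi xs in \<open>auto simp: hd_drop_conv_nth\<close>)
  then show ?thesis using xs i0 by simp
qed

end

section \<open>The breadth-first tree\<close>

locale triangle_with_tree = connected_simple_graph E n for E n +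
  fixes a b c :: nat
  assumes tri: "a < n" "b < n" "c < n" "distinct [a, b, c]" "E a b" "E b c" "E c a"
    and unique_cycle: "\<And>xs. is_cycle E n xs \<Longrightarrow> set xs = {a, b, c}"
    and deg_b: "degree E n b = 2" and deg_c: "degree E n c = 2"
begin

lemma triangle_distinct: "a \<noteq> b" "a \<noteq> c" "b \<noteq> c" "b \<noteq> a" "c \<noteq> a" "c \<noteq> b"
  using tri(4) by auto

lemma triangle_edges: "E a b" "E b a" "E b c" "E c b" "E c a" "E a c"
  using tri sym by auto

lemma neighbour_b: "v < n \<Longrightarrow> E b v \<Longrightarrow> v = a \<or> v = c"
  using degree_two_neighbours[OF deg_b tri(1) triangle_edges(2) tri(3) triangle_edges(3)]
    triangle_distinct by blast

lemma neighbour_c: "v < n \<Longrightarrow> E c v \<Longrightarrow> v = a \<or> v = b"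
  using degree_two_neighbours[OF deg_c tri(1) triangle_edges(5) tri(2) triangle_edges(4)]
    triangle_distinct by blast

definition depth where "depth x = d a x"

lemma depth_a: "depth a = 0" by (simp add: depth_def graph_dist_self tri)
lemma depth_b: "depth b = 1" using graph_dist_edge[of a b] tri triangle_edges by (simp add: depth_def)
lemma depth_c: "depth c = 1" using graph_dist_edge[of a c] tri triangle_edges by (simp add: depth_def)

lemma depth_eq_0: "x < n \<Longrightarrow> depth x = 0 \<Longrightarrow> x = a"
  using graph_dist_eq_0[of a x] tri by (simp add: depth_def)

lemma depth_edge_le: "x < n \<Longrightarrow> y < n \<Longrightarrow> E x y \<Longrightarrow> depth y \<le> depth x + 1"
  using graph_dist_triangle[of a x y] graph_dist_edge[of x y] tri by (simp add: depth_def)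

lemma exists_lower_neighbour:
  assumes x: "x < n" "x \<noteq> a"
  shows "\<exists>v. v < n \<and> E x v \<and> depth v + 1 = depth x"
proof -
  obtain xs where xs: "is_walk E n xs" "hd xs = a" "last xs = x" "length xs = d a x + 1"
    using graph_dist_walk tri x by blast
  define m where "m = length xs - 2"
  have "depth x \<noteq> 0" using depth_eq_0 x by blast
  then have m: "length xs = m + 2" using xs by (simp add: m_def depth_def)
  define v where "v = xs ! m"
  have "v \<in> set xs" using m by (simp add: v_def)
  then have v: "v < n" using xs by (auto simp: is_walk_def)
  have "xs \<noteq> []" using m by auto
  then have "xs ! (m + 1) = x" using xs(3) last_conv_nth[of xs] m by simp
  moreover have "E (xs ! m) (xs ! (m + 1))" using xs(1) m unfolding is_walk_def by simp
  ultimately have "E v x" by (simp add: v_def)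
  have prefix: "is_walk E n (take (m + 1) xs)" using xs(1) m unfolding is_walk_def
    by (auto dest: in_set_takeD)
  have "d a v + 1 \<le> length (take (m + 1) xs)"
  proof (rule graph_dist_le_walk[OF prefix])
    show "hd (take (m + 1) xs) = a" using xs m by (simp add: hd_take)
    have "take (m + 1) xs \<noteq> []" using m by (cases xs) auto
    then show "last (take (m + 1) xs) = v" using m by (simp add: last_conv_nth v_def)
  qed
  then have "depth v + 1 \<le> depth x" using xs m by (simp add: depth_def)
  moreover have "depth x \<le> depth v + 1" using depth_edge_le[OF v x(1) \<open>E v x\<close>] .
  ultimately show ?thesis using v \<open>E v x\<close> sym x by (intro exI[of _ v]) auto
qed

text \<open>The parent of a vertex in the breadth-first tree rooted at a; a is its own parent.\<close>
definition parent where
  "parent x = (if x = a then a else (SOME v. v < n \<and> E x v \<and> depth v + 1 = depth x))"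

lemma parent: assumes "x < n" "x \<noteq> a" shows "parent x < n" "E x (parent x)" "depth (parent x) + 1 = depth x"
  using someI_ex[OF exists_lower_neighbour[OF assms]] assms unfolding parent_def by auto

lemma parent_a: "parent a = a" by (simp add: parent_def)

lemma parent_lt: "x < n \<Longrightarrow> parent x < n" using parent(1)[of x] parent_a tri by (cases "x = a") auto

lemma depth_parent: "x < n \<Longrightarrow> depth (parent x) = depth x - 1"
  using parent(3)[of x] parent_a depth_a by (cases "x = a") auto

lemma ancestor_lt: "x < n \<Longrightarrow> (parent ^^ i) x < n"
  by (induction i) (auto simp: parent_lt)

lemma depth_ancestor: "x < n \<Longrightarrow> depth ((parent ^^ i) x) = depth x - i"
  by (induction i) (auto simp: depth_parent ancestor_lt)

lemma ancestor_depth_eq_a: "x < n \<Longrightarrow> (parent ^^ depth x) x = a"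
  using depth_ancestor[of x "depth x"] depth_eq_0 ancestor_lt by simp

lemma ancestor_edge:
  assumes "x < n" "i < depth x" shows "E ((parent ^^ i) x) ((parent ^^ Suc i) x)"
proof -
  have "(parent ^^ i) x \<noteq> a" using depth_ancestor[OF assms(1), of i] assms(2) depth_a by auto
  then show ?thesis using parent(2)[OF ancestor_lt[OF assms(1)]] by simp
qed

lemma ancestor_path:
  assumes "x < n" "m \<le> depth x + 1" "m \<ge> 1"
  shows "is_walk E n (map (\<lambda>i. (parent ^^ i) x) [0..<m])"
    and "distinct (map (\<lambda>i. (parent ^^ i) x) [0..<m])"
proof -
  show "is_walk E n (map (\<lambda>i. (parent ^^ i) x) [0..<m])"
    unfolding is_walk_def using assms ancestor_lt ancestor_edge by auto
  have "inj_on (\<lambda>i. (parent ^^ i) x) {0..<m}"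
  proof (rule inj_onI)
    fix i j assume "i \<in> {0..<m}" "j \<in> {0..<m}" "(parent ^^ i) x = (parent ^^ j) x"
    then show "i = j" using depth_ancestor[OF assms(1), of i] depth_ancestor[OF assms(1), of j] assms(2)
      by (metis atLeastLessThan_iff diff_diff_cancel less_Suc_eq_le Suc_eq_plus1 less_le_trans)
  qed
  then show "distinct (map (\<lambda>i. (parent ^^ i) x) [0..<m])" by (simp add: distinct_map)
qed

lemma first_common_ancestor:
  assumes u: "u1 < n" "u2 < n" "u1 \<noteq> u2" "depth u1 = depth u2"
  obtains k where "0 < k" "k \<le> depth u1" "(parent ^^ k) u1 = (parent ^^ k) u2"
    "\<And>j. j < k \<Longrightarrow> (parent ^^ j) u1 \<noteq> (parent ^^ j) u2"
proof -
  have meet: "(parent ^^ depth u1) u1 = (parent ^^ depth u1) u2"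
    using ancestor_depth_eq_a[OF u(1)] ancestor_depth_eq_a[OF u(2)] u(4) by simp
  define k where "k = (LEAST k. (parent ^^ k) u1 = (parent ^^ k) u2)"
  have k: "(parent ^^ k) u1 = (parent ^^ k) u2"
    using LeastI[of "\<lambda>k. (parent ^^ k) u1 = (parent ^^ k) u2", OF meet] unfolding k_def .
  moreover have "k \<le> depth u1" unfolding k_def by (rule Least_le) (rule meet)
  moreover have "\<And>j. j < k \<Longrightarrow> (parent ^^ j) u1 \<noteq> (parent ^^ j) u2"
    unfolding k_def using not_less_Least by blast
  moreover have "0 < k" using k u(3) by (cases k) auto
  ultimately show ?thesis using that by blast
qed

text \<open>The cycle consists of the paths of u1 and u2 up to their first common ancestor.\<close>
lemma cycle_through_equal_depth:
  assumes u: "u1 < n" "u2 < n" "u1 \<noteq> u2" "depth u1 = depth u2"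
  shows "\<exists>L. is_walk E n L \<and> distinct L \<and> hd L = u1 \<and> last L = u2 \<and> length L \<ge> 3 \<and>
    (\<forall>z\<in>set L. depth z \<le> depth u1)"
proof -
  obtain k where k: "0 < k" "k \<le> depth u1" "(parent ^^ k) u1 = (parent ^^ k) u2"
    and before: "\<And>j. j < k \<Longrightarrow> (parent ^^ j) u1 \<noteq> (parent ^^ j) u2"
    using first_common_ancestor[OF u] by blast
  define L1 where "L1 = map (\<lambda>i. (parent ^^ i) u1) [0..<k+1]"
  define L2 where "L2 = map (\<lambda>i. (parent ^^ i) u2) [0..<k]"
  note path1 = ancestor_path[OF u(1), of "k + 1", folded L1_def]
  note path2 = ancestor_path[OF u(2), of k, folded L2_def]
  have "E ((parent ^^ (k - 1)) u2) ((parent ^^ Suc (k - 1)) u2)"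
    by (rule ancestor_edge) (use u k in auto)
  then have "E (last L1) (hd (rev L2))"
    using sym ancestor_lt u k by (auto simp: L1_def L2_def last_map hd_rev)
  then have walk: "is_walk E n (L1 @ rev L2)"
    using is_walk_append path1(1) is_walk_rev[OF sym path2(1)] k u by auto
  have depths: "depth ((parent ^^ i) u1) = depth u1 - i" "depth ((parent ^^ i) u2) = depth u1 - i" for i
    using depth_ancestor u by auto
  have "set L1 \<inter> set L2 = {}"
  proof (rule ccontr)
    assume "set L1 \<inter> set L2 \<noteq> {}"
    then obtain z where "z \<in> set L1" "z \<in> set L2" by blast
    obtain i where "i < k + 1" "z = (parent ^^ i) u1"
      using \<open>z \<in> set L1\<close> unfolding L1_def by (auto simp del: upt_Suc)
    moreover obtain j where "j < k" "z = (parent ^^ j) u2" using \<open>z \<in> set L2\<close> unfolding L2_def by auto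
    ultimately have ij: "i \<le> k" "j < k" "(parent ^^ i) u1 = (parent ^^ j) u2" by auto
    then have "i = j" using depths[of i] depths[of j] k by (metis diff_diff_cancel le_trans less_imp_le)
    then show False using before ij by auto
  qed
  then have "distinct (L1 @ rev L2)" using path1(2) path2(2) k u by auto
  moreover have "hd (L1 @ rev L2) = u1" by (simp add: L1_def upt_conv_Cons del: upt_Suc)
  moreover have "last (L1 @ rev L2) = u2" using k by (simp add: L2_def last_rev upt_conv_Cons del: upt_Suc)
  moreover have "length (L1 @ rev L2) \<ge> 3" using k by (simp add: L1_def L2_def)
  moreover have "\<forall>z\<in>set (L1 @ rev L2). depth z \<le> depth u1" using depths by (auto simp: L1_def L2_def)
  ultimately show ?thesis using walk by blast
qed

text \<open>The vertices of the tree hanging at a, apart from a itself.\<close>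
definition T where "T = {x. x < n \<and> x \<noteq> a \<and> x \<noteq> b \<and> x \<noteq> c}"

lemma T_D: "x \<in> T \<Longrightarrow> x < n \<and> x \<noteq> a \<and> x \<noteq> b \<and> x \<noteq> c"
  by (simp add: T_def)

lemma finite_T: "finite T" by (simp add: T_def)

lemma neighbour_T_not_b_c: assumes "w \<in> T" "v < n" "E w v" shows "v \<noteq> b \<and> v \<noteq> c"
proof -
  have w: "w < n" "w \<noteq> a" "w \<noteq> b" "w \<noteq> c" using assms(1) by (auto simp: T_def)
  have "E v w" using sym assms w by auto
  then show ?thesis using neighbour_b[OF w(1)] neighbour_c[OF w(1)] w by auto
qed

lemma lower_neighbour_unique:
  assumes w: "w \<in> T" and v: "v < n" "E w v" "depth v + 1 = depth w"
  shows "v = parent w"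
proof (rule ccontr)
  assume ne: "v \<noteq> parent w"
  have wn: "w < n" "w \<noteq> a" using w by (auto simp: T_def)
  note pw = parent[OF wn]
  obtain L where L: "is_walk E n L" "distinct L" "hd L = v" "last L = parent w" "length L \<ge> 3"
    "\<forall>z\<in>set L. depth z \<le> depth v" using cycle_through_equal_depth[OF v(1) pw(1) ne] v(3) pw(3) by auto
  have "w \<notin> set L" using L(6) v(3) by fastforce
  moreover have "L \<noteq> []" using L by (simp add: is_walk_def)
  ultimately have "is_cycle E n (w # L)" unfolding is_cycle_def
    using L is_walk_Cons[OF L(1) wn(1)] v(2) sym[OF wn(1) pw(1)] pw(2) by auto
  then have "set (w # L) = {a, b, c}" by (rule unique_cycle)
  then show False using w by (auto simp: T_def)
qed

lemma no_equal_depth_neighbour: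
  assumes w: "w \<in> T" and v: "v < n" "E w v" "depth v = depth w"
  shows False
proof -
  have wn: "w < n" using w by (auto simp: T_def)
  have "w \<noteq> v" using irrefl wn v by auto
  then obtain L where L: "is_walk E n L" "distinct L" "hd L = w" "last L = v" "length L \<ge> 3"
    using cycle_through_equal_depth[OF wn v(1)] v(3) by auto
  then have "is_cycle E n L" unfolding is_cycle_def using v sym wn by auto
  then have "set L = {a, b, c}" by (rule unique_cycle)
  moreover have "w \<in> set L" using L by (metis hd_in_set is_walk_def)
  ultimately show False using w by (auto simp: T_def)
qed

lemma neighbour_T:
  assumes w: "w \<in> T" and v: "v < n" "E w v"
  shows "v = parent w \<or> (v \<in> T \<and> parent v = w)"
proof -
  have wn: "w < n" "w \<noteq> a" using w by (auto simp: T_def)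
  have "depth v \<le> depth w + 1" using depth_edge_le[OF wn(1) v] .
  moreover have "depth w \<le> depth v + 1" using depth_edge_le[OF v(1) wn(1)] sym v wn by auto
  ultimately consider "depth v + 1 = depth w" | "depth v = depth w" | "depth v = depth w + 1"
    by linarith
  then show ?thesis
  proof cases
    case 1
    then show ?thesis using lower_neighbour_unique[OF w v] by simp
  next
    case 2
    then show ?thesis using no_equal_depth_neighbour[OF w v] by simp
  next
    case 3
    then have vT: "v \<in> T" using neighbour_T_not_b_c[OF w v] v depth_a by (auto simp: T_def)
    have "E v w" using sym v wn by auto
    then have "w = parent v" using lower_neighbour_unique[OF vT wn(1)] 3 by simp
    then show ?thesis using vT by simp
  qed
qed

lemma parent_T: assumes "w \<in> T" shows "parent w \<in> T \<or> parent w = a"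
proof -
  have "w < n" "w \<noteq> a" using assms by (auto simp: T_def)
  then show ?thesis using parent neighbour_T_not_b_c[OF assms, of "parent w"] by (auto simp: T_def)
qed

lemma parent_b: "parent b = a"
proof -
  have b: "b < n" "b \<noteq> a" using tri triangle_distinct by auto
  then have "parent b = a \<or> parent b = c" using neighbour_b parent by auto
  moreover have "parent b \<noteq> c" using parent(3)[OF b] depth_b depth_c by auto
  ultimately show ?thesis by simp
qed

lemma depth_T: "x \<in> T \<Longrightarrow> depth x \<ge> 1"
  using depth_eq_0 T_D by fastforce

lemma ancestor_a: "(parent ^^ i) a = a"
  by (induction i) (auto simp: parent_a)

lemma ancestor_T: "x \<in> T \<Longrightarrow> (parent ^^ k) x \<in> T \<or> (parent ^^ k) x = a"
  by (induction k) (auto simp: parent_a dest: parent_T)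

definition subtree where "subtree y = {x \<in> T. \<exists>k. (parent ^^ k) x = y}"

lemma subtree_self: "y \<in> T \<Longrightarrow> y \<in> subtree y"
  unfolding subtree_def by (auto intro: exI[of _ 0])

lemma subtree_T: "x \<in> subtree y \<Longrightarrow> x \<in> T"
  unfolding subtree_def by auto

lemma subtree_parent:
  assumes y: "y \<in> T" and x: "x \<in> subtree y" "x \<noteq> y"
  shows "parent x \<in> subtree y"
proof -
  obtain k where k: "(parent ^^ k) x = y" and xT: "x \<in> T" using x unfolding subtree_def by auto
  have "k \<noteq> 0" using k x(2) by (cases k) auto
  moreover have "(parent ^^ Suc (k - 1)) x = (parent ^^ (k - 1)) (parent x)"
    by (simp only: funpow_Suc_right o_apply)
  ultimately have pk: "(parent ^^ (k - 1)) (parent x) = y" using k by simp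
  then have "parent x \<noteq> a" using ancestor_a y T_D by metis
  then have "parent x \<in> T" using parent_T[OF xT] by simp
  then show ?thesis using pk unfolding subtree_def by auto
qed

lemma subtree_child:
  assumes x: "x \<in> T" and p: "parent x \<in> subtree y"
  shows "x \<in> subtree y"
proof -
  obtain k where "(parent ^^ k) (parent x) = y" using p unfolding subtree_def by auto
  moreover have "(parent ^^ Suc k) x = (parent ^^ k) (parent x)" by (simp only: funpow_Suc_right o_apply)
  ultimately have "(parent ^^ Suc k) x = y" by simp
  then show ?thesis using x unfolding subtree_def by blast
qed

lemma depth_subtree:
  assumes y: "y \<in> T" and x: "x \<in> subtree y"
  shows "depth y \<le> depth x" and "depth x = depth y \<Longrightarrow> x = y"
proof -
  obtain k where k: "(parent ^^ k) x = y" and xT: "x \<in> T" using x unfolding subtree_def by auto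
  have hk: "depth y = depth x - k" using depth_ancestor[of x k] k T_D[OF xT] by simp
  then show "depth y \<le> depth x" by simp
  assume "depth x = depth y"
  then have "k = 0" using hk depth_T[OF y] by linarith
  then show "x = y" using k by simp
qed

lemma subtree_subset_parent:
  assumes "y \<in> T" "parent y \<in> T" shows "subtree y \<subseteq> subtree (parent y)"
proof
  fix x assume "x \<in> subtree y"
  then obtain k where "(parent ^^ k) x = y" and xT: "x \<in> T" unfolding subtree_def by auto
  then have "(parent ^^ Suc k) x = parent y" by simp
  then show "x \<in> subtree (parent y)" using xT unfolding subtree_def by blast
qed

lemma subtree_b: "subtree b = {}"
proof -
  have "(parent ^^ k) x \<noteq> b" if "x \<in> T" for x k
    using ancestor_T[OF that, of k] T_D triangle_distinct by auto
  then show ?thesis unfolding subtree_def by auto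
qed

lemma edge_leaving_subtree:
  assumes y: "y \<in> T" and s: "s \<in> subtree y" and v: "v < n" "v \<notin> subtree y" "E s v"
  shows "v = parent y \<and> s = y"
proof -
  from neighbour_T[OF subtree_T[OF s] v(1) v(3)] show ?thesis
  proof
    assume vp: "v = parent s"
    then have "s = y" using subtree_parent[OF y s] v(2) by blast
    then show ?thesis using vp by simp
  next
    assume "v \<in> T \<and> parent v = s"
    then have "v \<in> subtree y" using subtree_child[of v y] s by auto
    then show ?thesis using v(2) by simp
  qed
qed

lemma dist_outside_subtree:
  assumes y: "y \<in> T" and z: "z < n" "z \<notin> subtree y"
  shows "d y z = d (parent y) z + 1"
proof -
  have yn: "y < n" "y \<noteq> a" using T_D[OF y] by auto
  have "d (parent y) z + 1 \<le> d y z"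
    by (rule graph_dist_cut[where S = "subtree y"])
      (use edge_leaving_subtree[OF y] subtree_self[OF y] z yn parent_lt in auto)
  moreover have "d y z \<le> d (parent y) z + 1"
    using graph_dist_edge_le[OF yn(1) parent(1)[OF yn] z(1) parent(2)[OF yn]] .
  ultimately show ?thesis by simp
qed

lemma dist_inside_subtree:
  assumes y: "y \<in> T" and z: "z \<in> subtree y"
  shows "d (parent y) z = d y z + 1"
proof -
  have yn: "y < n" "y \<noteq> a" using T_D[OF y] by auto
  have zn: "z < n" using T_D[OF subtree_T[OF z]] by simp
  have py: "parent y < n" "parent y \<notin> subtree y"
    using parent[OF yn] depth_subtree(1)[OF y, of "parent y"] by auto
  have cut: "v = y" if "s \<in> {x. x < n \<and> x \<notin> subtree y}" "v < n"
    "v \<notin> {x. x < n \<and> x \<notin> subtree y}" "E s v" for s v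
  proof -
    have "v \<in> subtree y" "s < n" "s \<notin> subtree y" using that by auto
    moreover have "E v s" using sym that by auto
    ultimately show ?thesis using edge_leaving_subtree[OF y] by blast
  qed
  have "d y z + 1 \<le> d (parent y) z"
    by (rule graph_dist_cut[where S = "{x. x < n \<and> x \<notin> subtree y}"]) (use cut py z zn yn in auto)
  moreover have "d (parent y) z \<le> d y z + 1"
    using graph_dist_edge_le[OF parent(1)[OF yn] yn(1) zn] parent(2)[OF yn] sym yn parent(1)[OF yn]
    by auto
  ultimately show ?thesis by simp
qed

lemma dist_b_c:
  assumes z: "z < n" "z \<noteq> b" "z \<noteq> c"
  shows "d b z = depth z + 1" "d c z = depth z + 1"
proof -
  have cut: "v = a" if "s \<in> {b, c}" "v < n" "v \<notin> {b, c}" "E s v" for s v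
    using that neighbour_b neighbour_c by auto
  have "d a z + 1 \<le> d b z" by (rule graph_dist_cut[where S = "{b,c}"]) (use cut z tri in auto)
  moreover have "d b z \<le> d a z + 1" using graph_dist_edge_le[of b a z] tri z triangle_edges by simp
  ultimately show "d b z = depth z + 1" by (simp add: depth_def)
  have "d a z + 1 \<le> d c z" by (rule graph_dist_cut[where S = "{b,c}"]) (use cut z tri in auto)
  moreover have "d c z \<le> d a z + 1" using graph_dist_edge_le[of c a z] tri z triangle_edges by simp
  ultimately show "d c z = depth z + 1" by (simp add: depth_def)
qed

lemma dist_triangle_edges: "d b c = 1" "d c b = 1" "d a b = 1" "d b a = 1" "d a c = 1" "d c a = 1"
  using graph_dist_edge tri triangle_edges by auto

lemma deep_vertex:
  assumes "w \<in> T" "parent w \<noteq> a"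
  shows "parent w \<in> T" "depth w = depth (parent w) + 1" "depth (parent w) = depth (parent (parent w)) + 1"
    "parent (parent w) < n"
proof -
  show pT: "parent w \<in> T" using parent_T[OF assms(1)] assms(2) by simp
  show "depth w = depth (parent w) + 1" using parent(3)[of w] T_D[OF assms(1)] by simp
  show "depth (parent w) = depth (parent (parent w)) + 1" using parent(3)[of "parent w"] T_D[OF pT] by simp
  show "parent (parent w) < n" using parent_lt T_D[OF pT] by simp
qed

lemma depth_child_of_a: "w < n \<Longrightarrow> w \<noteq> a \<Longrightarrow> parent w = a \<Longrightarrow> depth w = 1"
  using parent(3)[of w] depth_a by simp

lemma child_of_a_cases:
  assumes "w < n" "w \<noteq> a" "w \<noteq> c" "parent w = a"
  shows "w = b \<or> w \<in> T"
  using assms by (auto simp: T_def)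

lemma vertex_cases:
  assumes "v < n"
  obtains "v = a" | "v = c" | "v \<noteq> a" "v \<noteq> c" "parent v = a" | "v \<in> T" "parent v \<noteq> a"
  using assms parent_b by (auto simp: T_def)

section \<open>A congruence of the distance squared matrix\<close>

definition dsq :: "nat \<Rightarrow> nat \<Rightarrow> real" where "dsq x y = real ((d x y)\<^sup>2)"

lemma dsq_sym: "x < n \<Longrightarrow> y < n \<Longrightarrow> dsq x y = dsq y x"
  by (simp add: dsq_def graph_dist_sym)

lemma dsq_a: "x < n \<Longrightarrow> dsq a x = real ((depth x)\<^sup>2)" "x < n \<Longrightarrow> dsq x a = real ((depth x)\<^sup>2)"
  by (auto simp: dsq_def depth_def graph_dist_sym tri)

text \<open>Row v of the matrix C, applied to a vector F, of the congruence C D C^T that turns the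
  distance squared matrix D into the matrix gram below.\<close>
definition row_op :: "nat \<Rightarrow> (nat \<Rightarrow> real) \<Rightarrow> real" where
  "row_op v F = (if v = a then F a else if v = c then F c - F b else if parent v = a then F a - F v
     else 2 * F (parent v) - F v - F (parent (parent v)))"

definition congr_dsq :: "nat \<Rightarrow> nat \<Rightarrow> real" where
  "congr_dsq v w = row_op v (\<lambda>x. row_op w (\<lambda>y. dsq x y))"

lemma row_op_swap: "row_op v (\<lambda>x. row_op w (\<lambda>y. D x y)) = row_op w (\<lambda>y. row_op v (\<lambda>x. D x y))"
  unfolding row_op_def by (simp add: algebra_simps)

lemma row_op_cong: "(\<And>x. x < n \<Longrightarrow> F x = F' x) \<Longrightarrow> v < n \<Longrightarrow> row_op v F = row_op v F'"
  unfolding row_op_def using tri parent_lt by auto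

lemma congr_dsq_sym: assumes "v < n" "w < n" shows "congr_dsq v w = congr_dsq w v"
proof -
  have "congr_dsq w v = row_op v (\<lambda>y. row_op w (\<lambda>x. dsq x y))" unfolding congr_dsq_def by (rule row_op_swap)
  also have "\<dots> = row_op v (\<lambda>y. row_op w (\<lambda>x. dsq y x))"
    by (rule row_op_cong[OF _ assms(1)], rule row_op_cong[OF _ assms(2)]) (simp add: dsq_sym)
  finally show ?thesis by (simp add: congr_dsq_def)
qed

text \<open>For a child w of a, the vertices x other than c with d x w + 1 = depth x.\<close>
definition branch where "branch w = insert w (subtree w)"

lemma row_op_child_of_a_dsq:
  assumes w: "w < n" "w \<noteq> a" "w \<noteq> c" "parent w = a" and x: "x < n" "x \<noteq> c"
  shows "row_op w (\<lambda>y. dsq x y) = - (2 * real (depth x) + 1) + (if x \<in> branch w then 4 * real (depth x) else 0)"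
proof -
  have row: "row_op w (\<lambda>y. dsq x y) = real (depth x) * real (depth x) - dsq x w"
    using w dsq_a(2)[OF x(1)] by (simp add: row_op_def power2_eq_square)
  consider "w = b" | "w \<in> T" using child_of_a_cases[OF w] by blast
  then show ?thesis
  proof cases
    case 1
    have "(parent ^^ k) x \<noteq> b" if "x \<in> T" for x k
      using ancestor_T[OF that, of k] T_D triangle_distinct by auto
    then have "subtree b = {}" unfolding subtree_def by auto
    then have br: "branch w = {b}" using 1 by (simp add: branch_def)
    show ?thesis
    proof (cases "x = b")
      case True
      then show ?thesis using 1 row br depth_b by (simp add: dsq_def graph_dist_self tri)
    next
      case False
      have "d x b = depth x + 1" using dist_b_c(1)[OF x(1) False x(2)] graph_dist_sym x tri by simp
      then show ?thesis using 1 row br False by (simp add: dsq_def power2_eq_square algebra_simps)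
    qed
  next
    case 2
    then have br: "branch w = subtree w" using subtree_self by (auto simp: branch_def)
    show ?thesis
    proof (cases "x \<in> subtree w")
      case True
      have "depth x = d x w + 1" using dist_inside_subtree[OF 2 True] w x graph_dist_sym by (simp add: depth_def)
      then show ?thesis using True row br by (simp add: dsq_def power2_eq_square algebra_simps)
    next
      case False
      have "d x w = depth x + 1" using dist_outside_subtree[OF 2 x(1) False] w x graph_dist_sym
        by (simp add: depth_def)
      then show ?thesis using False row br by (simp add: dsq_def power2_eq_square algebra_simps)
    qed
  qed
qed

lemma row_op_deep_dsq:
  assumes w: "w \<in> T" "parent w \<noteq> a" and x: "x < n"
  shows "row_op w (\<lambda>y. dsq x y)
    = -2 - (if x \<in> subtree (parent w) \<and> x \<notin> subtree w then 4 * real (d (parent w) x) else 0)"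
proof -
  note pw = deep_vertex[OF w]
  have wn: "w \<noteq> a" "w \<noteq> c" "w < n" and pn: "parent w < n" using T_D[OF w(1)] T_D[OF pw(1)] by auto
  have row: "row_op w (\<lambda>y. dsq x y) = 2 * dsq x (parent w) - dsq x w - dsq x (parent (parent w))"
    using w wn by (simp add: row_op_def)
  have dd: "dsq x y = real ((d y x)\<^sup>2)" if "y < n" for y using graph_dist_sym[OF x that] by (simp add: dsq_def)
  show ?thesis
  proof (cases "x \<in> subtree w")
    case True
    have "d (parent w) x = d w x + 1" using dist_inside_subtree[OF w(1) True] .
    moreover have "d (parent (parent w)) x = d (parent w) x + 1"
      using dist_inside_subtree[OF pw(1)] subtree_subset_parent[OF w(1) pw(1)] True by auto
    ultimately show ?thesis using row True pn pw(4) wn by (simp add: dd power2_eq_square algebra_simps)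
  next
    case False
    have e1: "d w x = d (parent w) x + 1" using dist_outside_subtree[OF w(1) x False] .
    show ?thesis
    proof (cases "x \<in> subtree (parent w)")
      case True
      have "d (parent (parent w)) x = d (parent w) x + 1" using dist_inside_subtree[OF pw(1) True] .
      then show ?thesis using row True False e1 pn pw(4) wn by (simp add: dd power2_eq_square algebra_simps)
    next
      case outside: False
      have "d (parent w) x = d (parent (parent w)) x + 1" using dist_outside_subtree[OF pw(1) x outside] .
      then show ?thesis using row outside False e1 pn pw(4) wn by (simp add: dd power2_eq_square algebra_simps)
    qed
  qed
qed

lemma branch_child_of_a_depth_1:
  assumes w: "w < n" "w \<noteq> a" "w \<noteq> c" "parent w = a" and x: "x \<in> branch w" "depth x = 1"
  shows "x = w"
  using child_of_a_cases[OF w]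
proof
  assume "w \<in> T"
  then show ?thesis using depth_subtree(2) x depth_child_of_a[OF w(1,2,4)] by (auto simp: branch_def)
qed (use x subtree_b in \<open>simp add: branch_def\<close>)

lemma row_op_T_vanish:
  assumes w: "w \<in> T" and F: "\<And>y. y < n \<Longrightarrow> y \<noteq> b \<Longrightarrow> y \<noteq> c \<Longrightarrow> F y = 0"
  shows "row_op w F = 0"
proof -
  have pw: "parent w \<in> T \<or> parent w = a" using parent_T[OF w] .
  then have "parent (parent w) \<in> T \<or> parent (parent w) = a" using parent_T parent_a by auto
  then show ?thesis using w pw F T_D tri triangle_distinct by (auto simp: row_op_def)
qed

lemma congr_dsq_a:
  assumes w: "w < n"
  shows "congr_dsq a w = (if w = a \<or> w = c then 0 else if parent w = a then -1 else -2)"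
  using w
proof (cases rule: vertex_cases)
  case 1
  then show ?thesis by (simp add: congr_dsq_def row_op_def dsq_def graph_dist_self tri)
next
  case 2
  then show ?thesis using triangle_distinct by (simp add: congr_dsq_def row_op_def dsq_def dist_triangle_edges)
next
  case 3
  then have "depth w = 1" using depth_child_of_a w by simp
  then show ?thesis using 3 w by (simp add: congr_dsq_def row_op_def dsq_a tri depth_a)
next
  case 4
  note pw = deep_vertex[OF 4]
  have "congr_dsq a w = 2 * real ((depth (parent w))\<^sup>2) - real ((depth w)\<^sup>2)
      - real ((depth (parent (parent w)))\<^sup>2)"
    using 4 T_D[OF 4(1)] T_D[OF pw(1)] pw(4) by (simp add: congr_dsq_def row_op_def dsq_a)
  also have "\<dots> = -2" using pw(2,3) by (simp add: power2_eq_square algebra_simps)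
  finally show ?thesis using 4 T_D[OF 4(1)] by simp
qed

lemma congr_dsq_c:
  assumes w: "w < n" "w \<noteq> a"
  shows "congr_dsq c w = (if w = c then -2 else if w = b then -1 else 0)"
proof -
  consider "w = c" | "w = b" | "w \<in> T" using w by (auto simp: T_def)
  then show ?thesis
  proof cases
    case 1
    then show ?thesis using triangle_distinct
      by (simp add: congr_dsq_def row_op_def dsq_def dist_triangle_edges graph_dist_self tri)
  next
    case 2
    have "congr_dsq c b = (dsq c a - dsq b a) - (dsq c b - dsq b b)"
      using triangle_distinct parent_b by (simp add: congr_dsq_def row_op_def)
    then show ?thesis using 2 triangle_distinct by (simp add: dsq_def dist_triangle_edges graph_dist_self tri)
  next
    case 3
    have "congr_dsq c w = row_op w (\<lambda>y. dsq c y - dsq b y)"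
      using triangle_distinct by (simp add: congr_dsq_def row_op_def)
    also have "\<dots> = 0" by (rule row_op_T_vanish[OF 3]) (simp add: dist_b_c dsq_def)
    finally show ?thesis using 3 T_D by auto
  qed
qed

lemma congr_dsq_children_of_a:
  assumes v: "v < n" "v \<noteq> a" "v \<noteq> c" "parent v = a" and w: "w < n" "w \<noteq> a" "w \<noteq> c" "parent w = a"
  shows "congr_dsq v w = (if v = w then -2 else 2)"
proof -
  have dv: "depth v = 1" using depth_child_of_a v by simp
  have "v \<in> branch w \<longleftrightarrow> v = w" using branch_child_of_a_depth_1[OF w _ dv] by (auto simp: branch_def)
  then have "row_op w (\<lambda>y. dsq v y) = -3 + (if v = w then 4 else 0)"
    using row_op_child_of_a_dsq[OF w v(1,3)] dv by auto
  moreover have "row_op w (\<lambda>y. dsq a y) = -1"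
    using row_op_child_of_a_dsq[OF w, of a] tri triangle_distinct depth_a by simp
  moreover have "congr_dsq v w = row_op w (\<lambda>y. dsq a y) - row_op w (\<lambda>y. dsq v y)"
    using v by (simp add: congr_dsq_def row_op_def)
  ultimately show ?thesis by simp
qed

lemma branch_along_deep_path:
  assumes v: "v \<in> T" "parent v \<noteq> a" and w: "w < n" "w \<noteq> a" "w \<noteq> c" "parent w = a"
  defines "P \<equiv> parent v" and "Q \<equiv> parent (parent v)"
  shows "(P \<in> branch w \<and> v \<in> branch w \<and> Q \<in> branch w)
    \<or> (P \<in> branch w \<and> v \<in> branch w \<and> Q \<notin> branch w \<and> depth P = 1)
    \<or> (P \<notin> branch w \<and> v \<notin> branch w \<and> Q \<notin> branch w)"
  using child_of_a_cases[OF w]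
proof
  assume "w = b"
  have "P \<in> T" "Q \<in> T \<or> Q = a" using deep_vertex[OF v] parent_T by (auto simp: P_def Q_def)
  then have "v \<noteq> b" "P \<noteq> b" "Q \<noteq> b" using T_D[OF v(1)] T_D triangle_distinct by auto
  then show ?thesis using \<open>w = b\<close> by (simp add: branch_def subtree_b)
next
  assume wT: "w \<in> T"
  have PT: "P \<in> T" using deep_vertex[OF v] by (simp add: P_def)
  have br: "branch w = subtree w" using subtree_self[OF wT] by (auto simp: branch_def)
  show ?thesis
  proof (cases "P \<in> subtree w")
    case True
    have vS: "v \<in> subtree w" using subtree_child[OF v(1)] True by (simp add: P_def)
    show ?thesis
    proof (cases "P = w")
      case True
      then have "Q \<notin> subtree w" using w subtree_T T_D by (auto simp: Q_def P_def)
      then show ?thesis using vS \<open>P \<in> subtree w\<close> True depth_child_of_a[OF w(1,2,4)] br by auto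
    next
      case False
      have "Q \<in> subtree w" using subtree_parent[OF wT \<open>P \<in> subtree w\<close> False] by (simp add: Q_def P_def)
      then show ?thesis using vS \<open>P \<in> subtree w\<close> br by auto
    qed
  next
    case False
    have "Q \<notin> subtree w" using subtree_child[OF PT] False by (auto simp: Q_def P_def)
    moreover have "v \<notin> subtree w"
    proof
      assume "v \<in> subtree w"
      moreover have "v \<noteq> w" using deep_vertex[OF v] depth_T[OF PT] depth_child_of_a[OF w(1,2,4)]
        by (auto simp: P_def)
      ultimately show False using subtree_parent[OF wT] False by (auto simp: P_def)
    qed
    ultimately show ?thesis using False br by auto
  qed
qed

lemma congr_dsq_deep_child_of_a:
  assumes v: "v \<in> T" "parent v \<noteq> a" and w: "w < n" "w \<noteq> a" "w \<noteq> c" "parent w = a"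
  shows "congr_dsq v w = 0"
proof -
  note pv = deep_vertex[OF v]
  define P where "P = parent v"
  define Q where "Q = parent P"
  have vn: "v < n" "v \<noteq> c" "v \<noteq> a" "v \<noteq> b" using T_D[OF v(1)] by auto
  have Pn: "P < n" "P \<noteq> c" using T_D[OF pv(1)] by (auto simp: P_def)
  have Qn: "Q < n" "Q \<noteq> c" using pv(4) parent_T[OF pv(1)] T_D triangle_distinct by (auto simp: Q_def P_def)
  have row: "row_op w (\<lambda>y. dsq x y)
      = - (2 * real (depth x) + 1) + (if x \<in> branch w then 4 * real (depth x) else 0)"
    if "x < n" "x \<noteq> c" for x using row_op_child_of_a_dsq[OF w that] .
  have "congr_dsq v w = 2 * row_op w (\<lambda>y. dsq P y) - row_op w (\<lambda>y. dsq v y) - row_op w (\<lambda>y. dsq Q y)"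
    using v vn by (simp add: congr_dsq_def row_op_def P_def Q_def)
  also have "\<dots> = 0"
    using branch_along_deep_path[OF v w, folded P_def Q_def] pv(2,3) row[OF Pn] row[OF vn(1,2)] row[OF Qn]
    by (auto simp: P_def Q_def algebra_simps)
  finally show ?thesis .
qed

text \<open>For a deep vertex w, the row of w applied to the squared distances from x is
  -2 - 4 * off_branch_dist w x.\<close>
definition off_branch_dist :: "nat \<Rightarrow> nat \<Rightarrow> real" where
  "off_branch_dist w x = (if x \<in> subtree (parent w) \<and> x \<notin> subtree w then real (d (parent w) x) else 0)"

lemma off_branch_dist_siblings:
  assumes v: "v \<in> T" "parent v \<noteq> a" and w: "w \<in> T" "parent w \<noteq> a" and P: "parent v = parent w"
  defines "t \<equiv> off_branch_dist w"
  shows "2 * t (parent v) - t v - t (parent (parent v)) = (if v = w then 0 else -1)"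
proof -
  note pv = deep_vertex[OF v] and pw = deep_vertex[OF w]
  have "t (parent v) = 0" using P T_D[OF pw(1)] by (simp add: t_def off_branch_dist_def graph_dist_self)
  moreover have "parent (parent v) \<notin> subtree (parent w)"
    using depth_subtree(1)[OF pw(1), of "parent (parent v)"] pv(3) P by auto
  then have "t (parent (parent v)) = 0" by (simp add: t_def off_branch_dist_def)
  moreover have "v \<in> subtree (parent w)" using subtree_child[OF v(1)] subtree_self[OF pw(1)] P by simp
  moreover have "v \<in> subtree w \<longleftrightarrow> v = w"
    using depth_subtree(2)[OF w(1), of v] pv(2) pw(2) P subtree_self[OF w(1)] by auto
  moreover have "d (parent w) v = 1"
    using graph_dist_edge[of "parent w" v] parent(2)[of v] sym T_D[OF v(1)] T_D[OF pw(1)] P by auto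
  ultimately show ?thesis by (simp add: t_def off_branch_dist_def)
qed

lemma off_branch_dist_parent:
  assumes w: "w \<in> T" "parent w \<noteq> a"
    and x: "x \<in> subtree (parent w)" "x \<notin> subtree w" "x \<noteq> parent w"
  shows "off_branch_dist w x = off_branch_dist w (parent x) + 1"
proof -
  note pw = deep_vertex[OF w]
  have xT: "x \<in> T" using subtree_T[OF x(1)] .
  have px: "parent x \<in> subtree (parent w)" using subtree_parent[OF pw(1) x(1,3)] .
  moreover have "parent x \<notin> subtree w" using subtree_child[OF xT] x(2) by blast
  moreover have "depth (parent w) < depth x" using depth_subtree[OF pw(1) x(1)] x(3) by fastforce
  then have "parent w \<notin> subtree x" using depth_subtree(1)[OF xT, of "parent w"] by auto
  then have "d x (parent w) = d (parent x) (parent w) + 1"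
    using dist_outside_subtree[OF xT] T_D[OF pw(1)] by simp
  then have "d (parent w) x = d (parent w) (parent x) + 1"
    using graph_dist_sym T_D[OF xT] T_D[OF pw(1)] parent_lt by simp
  ultimately show ?thesis using x by (simp add: off_branch_dist_def)
qed

lemma off_branch_dist_non_siblings:
  assumes v: "v \<in> T" "parent v \<noteq> a" and w: "w \<in> T" "parent w \<noteq> a" and P: "parent v \<noteq> parent w"
  defines "t \<equiv> off_branch_dist w"
  shows "2 * t (parent v) - t v - t (parent (parent v)) = 0"
proof -
  note pv = deep_vertex[OF v] and pw = deep_vertex[OF w]
  define P where "P = parent v"
  define Q where "Q = parent P"
  define P' where "P' = parent w"
  have PT: "P \<in> T" and P'T: "P' \<in> T" using pv(1) pw(1) by (simp_all add: P_def P'_def)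
  consider "P \<in> subtree P'" "P \<notin> subtree w" | "P \<in> subtree w" | "P \<notin> subtree P'" by blast
  then show ?thesis
  proof cases
    case 1
    have "v \<in> subtree P'" using subtree_child[OF v(1)] 1(1) by (simp add: P_def)
    moreover have "v \<notin> subtree w" using subtree_parent[OF w(1)] 1(2) P by (auto simp: P_def P'_def)
    moreover have "v \<noteq> P'" using depth_subtree(1)[OF P'T 1(1)] pv(2) by (auto simp: P_def)
    moreover have "P \<noteq> P'" using P by (simp add: P_def P'_def)
    ultimately show ?thesis using off_branch_dist_parent[OF w, of v] off_branch_dist_parent[OF w, of P] 1
      by (simp add: t_def P_def Q_def P'_def)
  next
    case 2
    have "v \<in> subtree w" using subtree_child[OF v(1)] 2 by (simp add: P_def)
    moreover have "Q \<in> subtree w \<or> Q = P'"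
      using subtree_parent[OF w(1) 2] by (cases "P = w") (auto simp: Q_def P'_def)
    moreover have "t P' = 0" using T_D[OF P'T] by (simp add: t_def off_branch_dist_def graph_dist_self P'_def)
    ultimately show ?thesis using 2 by (auto simp: t_def off_branch_dist_def P_def Q_def)
  next
    case 3
    have "v \<in> subtree P' \<Longrightarrow> v = P'" using subtree_parent[OF P'T] 3 by (auto simp: P_def)
    moreover have "Q \<notin> subtree P'" using subtree_child[OF PT, of P'] 3 by (auto simp: Q_def)
    ultimately show ?thesis using 3 T_D[OF P'T]
      by (auto simp: t_def off_branch_dist_def graph_dist_self P_def Q_def P'_def)
  qed
qed

lemma congr_dsq_deep_deep:
  assumes v: "v \<in> T" "parent v \<noteq> a" and w: "w \<in> T" "parent w \<noteq> a"
  shows "congr_dsq v w = (if v = w then -4 else 0) + (if parent v = parent w then 4 else 0)"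
proof -
  note pv = deep_vertex[OF v]
  have vn: "v < n" "v \<noteq> a" "v \<noteq> c" and Pn: "parent v < n" using T_D[OF v(1)] T_D[OF pv(1)] by auto
  have row: "row_op w (\<lambda>y. dsq x y) = -2 - 4 * off_branch_dist w x" if "x < n" for x
    using row_op_deep_dsq[OF w that] by (simp add: off_branch_dist_def)
  have "congr_dsq v w = 2 * row_op w (\<lambda>y. dsq (parent v) y) - row_op w (\<lambda>y. dsq v y)
      - row_op w (\<lambda>y. dsq (parent (parent v)) y)"
    using v vn by (simp add: congr_dsq_def row_op_def)
  also have "\<dots> = -4 * (2 * off_branch_dist w (parent v) - off_branch_dist w v
      - off_branch_dist w (parent (parent v)))"
    using row[OF Pn] row[OF vn(1)] row[OF pv(4)] by (simp add: algebra_simps)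
  finally show ?thesis
    using off_branch_dist_siblings[OF v w] off_branch_dist_non_siblings[OF v w] by (cases "v = w") auto
qed

definition gram :: "nat \<Rightarrow> nat \<Rightarrow> real" where
  "gram v w = (if v = a then (if w = a \<or> w = c then 0 else if parent w = a then -1 else -2)
    else if w = a then (if v = c then 0 else if parent v = a then -1 else -2)
    else if v = c then (if w = c then -2 else if w = b then -1 else 0)
    else if w = c then (if v = b then -1 else 0)
    else (if v = w then -4 else 0) + (if parent v = parent w then (if parent v = a then 2 else 4) else 0))"

lemma congr_dsq_eq_gram_off_a_c:
  assumes v: "v < n" "v \<noteq> a" "v \<noteq> c" and w: "w < n" "w \<noteq> a" "w \<noteq> c"
  shows "congr_dsq v w = gram v w"
proof -
  have classes: "parent x = a \<or> (x \<in> T \<and> parent x \<noteq> a)" if "x < n" "x \<noteq> a" "x \<noteq> c" for x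
    using that(1) by (cases rule: vertex_cases) (use that in auto)
  consider "parent v = a" "parent w = a" | "parent v = a" "w \<in> T" "parent w \<noteq> a"
    | "v \<in> T" "parent v \<noteq> a" "parent w = a" | "v \<in> T" "parent v \<noteq> a" "w \<in> T" "parent w \<noteq> a"
    using classes[OF v] classes[OF w] by blast
  then show ?thesis
  proof cases
    case 1
    then show ?thesis using congr_dsq_children_of_a v w by (simp add: gram_def)
  next
    case 2
    then have "congr_dsq v w = 0"
      using congr_dsq_sym[OF v(1) w(1)] congr_dsq_deep_child_of_a[OF 2(2,3) v] by simp
    then show ?thesis using 2 v w by (auto simp: gram_def)
  next
    case 3
    then show ?thesis using congr_dsq_deep_child_of_a[OF 3(1,2) w] v w by (auto simp: gram_def)
  next
    case 4
    then show ?thesis using congr_dsq_deep_deep v w by (simp add: gram_def)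
  qed
qed

lemma congr_dsq_eq_gram:
  assumes v: "v < n" and w: "w < n"
  shows "congr_dsq v w = gram v w"
proof -
  consider "v = a" | "w = a" "v \<noteq> a" | "v = c" "w \<noteq> a" | "w = c" "v \<noteq> a" "v \<noteq> c"
    | "v \<noteq> a" "v \<noteq> c" "w \<noteq> a" "w \<noteq> c" by blast
  then show ?thesis
  proof cases
    case 1
    then show ?thesis using congr_dsq_a[OF w] by (simp add: gram_def)
  next
    case 2
    then show ?thesis using congr_dsq_sym[OF v w] congr_dsq_a[OF v] by (auto simp: gram_def)
  next
    case 3
    then show ?thesis using congr_dsq_c[OF w] triangle_distinct by (simp add: gram_def)
  next
    case 4
    then show ?thesis using congr_dsq_sym[OF v w] congr_dsq_c[OF v] triangle_distinct parent_b
      by (auto simp: gram_def)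
  qed (use congr_dsq_eq_gram_off_a_c v w in blast)
qed

definition trans_mat :: "nat \<Rightarrow> nat \<Rightarrow> real" where
  "trans_mat v x = row_op v (\<lambda>y. if y = x then 1 else 0)"

lemma sum_trans_mat: assumes v: "v < n" shows "(\<Sum>x<n. trans_mat v x * F x) = row_op v F"
proof -
  have delta: "(\<Sum>x<n. (if y = x then 1 else 0) * F x) = F y" if "y < n" for y
    using sum_delta_left[OF that] .
  have pv: "parent v < n" "parent (parent v) < n" using parent_lt v by auto
  consider "v = a" | "v \<noteq> a" "v = c" | "v \<noteq> a" "v \<noteq> c" "parent v = a"
    | "v \<noteq> a" "v \<noteq> c" "parent v \<noteq> a" by blast
  then show ?thesis
  proof cases
    case 1
    then show ?thesis using tri by (simp add: trans_mat_def row_op_def delta)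
  next
    case 2
    then have "(\<Sum>x<n. trans_mat v x * F x)
        = (\<Sum>x<n. (if c = x then 1 else 0) * F x) - (\<Sum>x<n. (if b = x then 1 else 0) * F x)"
      by (simp add: trans_mat_def row_op_def algebra_simps sum_subtractf)
    then show ?thesis using 2 tri by (simp add: delta row_op_def)
  next
    case 3
    then have "(\<Sum>x<n. trans_mat v x * F x)
        = (\<Sum>x<n. (if a = x then 1 else 0) * F x) - (\<Sum>x<n. (if v = x then 1 else 0) * F x)"
      by (simp add: trans_mat_def row_op_def algebra_simps sum_subtractf)
    then show ?thesis using 3 tri v by (simp add: delta row_op_def)
  next
    case 4
    then have "(\<Sum>x<n. trans_mat v x * F x) = 2 * (\<Sum>x<n. (if parent v = x then 1 else 0) * F x)
        - (\<Sum>x<n. (if v = x then 1 else 0) * F x) - (\<Sum>x<n. (if parent (parent v) = x then 1 else 0) * F x)"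
      by (simp add: trans_mat_def row_op_def algebra_simps sum_subtractf sum.distrib sum_distrib_left)
    then show ?thesis using 4 pv v by (simp add: delta row_op_def)
  qed
qed

abbreviation DM where "DM \<equiv> dist_sq_matrix E n"

lemma DM_carrier: "DM \<in> carrier_mat n n" by (simp add: dist_sq_matrix_def)

lemma DM_entry: "x < n \<Longrightarrow> y < n \<Longrightarrow> DM $$ (x,y) = dsq x y" by (simp add: dist_sq_matrix_def dsq_def)

lemma DM_sym: "x < n \<Longrightarrow> y < n \<Longrightarrow> DM $$ (x,y) = DM $$ (y,x)" using DM_entry dsq_sym by simp

definition gram_form :: "(nat \<Rightarrow> real) \<Rightarrow> real" where
  "gram_form \<alpha> = (\<Sum>v<n. \<Sum>w<n. \<alpha> v * \<alpha> w * gram v w)"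

lemma quad_form_trans: "quad_form DM n (\<lambda>x. \<Sum>v<n. \<alpha> v * trans_mat v x) = gram_form \<alpha>"
proof -
  have "quad_form DM n (\<lambda>x. \<Sum>v<n. \<alpha> v * trans_mat v x) =
      (\<Sum>x<n. \<Sum>y<n. \<Sum>v<n. \<Sum>w<n. \<alpha> v * \<alpha> w * (trans_mat v x * (trans_mat w y * dsq x y)))"
    unfolding quad_form_def by (intro sum.cong refl) (simp add: DM_entry sum_distrib_left sum_distrib_right mult_ac)
  also have "\<dots> = (\<Sum>x<n. \<Sum>v<n. \<Sum>y<n. \<Sum>w<n. \<alpha> v * \<alpha> w * (trans_mat v x * (trans_mat w y * dsq x y)))"
    by (rule sum.cong[OF refl], rule sum.swap)
  also have "\<dots> = (\<Sum>v<n. \<Sum>x<n. \<Sum>y<n. \<Sum>w<n. \<alpha> v * \<alpha> w * (trans_mat v x * (trans_mat w y * dsq x y)))"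
    by (rule sum.swap)
  also have "\<dots> = (\<Sum>v<n. \<Sum>x<n. \<Sum>w<n. \<Sum>y<n. \<alpha> v * \<alpha> w * (trans_mat v x * (trans_mat w y * dsq x y)))"
    by (rule sum.cong[OF refl], rule sum.cong[OF refl], rule sum.swap)
  also have "\<dots> = (\<Sum>v<n. \<Sum>w<n. \<Sum>x<n. \<Sum>y<n. \<alpha> v * \<alpha> w * (trans_mat v x * (trans_mat w y * dsq x y)))"
    by (rule sum.cong[OF refl], rule sum.swap)
  also have "\<dots> = (\<Sum>v<n. \<Sum>w<n. \<alpha> v * \<alpha> w * (\<Sum>x<n. trans_mat v x * (\<Sum>y<n. trans_mat w y * dsq x y)))"
    by (simp add: sum_distrib_left)
  also have "\<dots> = gram_form \<alpha>"
    unfolding gram_form_def by (intro sum.cong refl) (simp add: sum_trans_mat congr_dsq_def[symmetric] congr_dsq_eq_gram)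
  finally show ?thesis .
qed

definition children where "children x = {w \<in> T. parent w = x}"

definition child_sum :: "(nat \<Rightarrow> real) \<Rightarrow> nat \<Rightarrow> real" where
  "child_sum \<alpha> x = (\<Sum>w\<in>children x. \<alpha> w)"

definition deep_sum :: "(nat \<Rightarrow> real) \<Rightarrow> real" where
  "deep_sum \<alpha> = (\<Sum>w\<in>{w\<in>T. parent w \<noteq> a}. \<alpha> w)"

lemma finite_children: "finite (children x)" using finite_T by (simp add: children_def)

lemma children_T: "children x \<subseteq> T" by (auto simp: children_def)

lemma sum_vertices: "(\<Sum>w<n. f w) = f a + f b + f c + (\<Sum>w\<in>T. (f w :: real))"
proof -
  have "{..<n} = insert a (insert b (insert c T))" using tri by (auto simp: T_def)
  moreover have "a \<notin> T" "b \<notin> T" "c \<notin> T" by (auto simp: T_def)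
  ultimately show ?thesis using triangle_distinct finite_T by simp
qed

lemma sum_deep_by_parent: "(\<Sum>w\<in>{w\<in>T. parent w \<noteq> a}. g w) = (\<Sum>x\<in>T. \<Sum>w\<in>children x. (g w :: real))"
proof -
  have "parent ` {w\<in>T. parent w \<noteq> a} \<subseteq> T" using parent_T by auto
  then have "(\<Sum>w\<in>{w\<in>T. parent w \<noteq> a}. g w)
      = (\<Sum>x\<in>T. \<Sum>w\<in>{w \<in> {w\<in>T. parent w \<noteq> a}. parent w = x}. g w)"
    by (intro sum.group[symmetric]) (use finite_T in auto)
  also have "\<dots> = (\<Sum>x\<in>T. \<Sum>w\<in>children x. g w)"
    by (intro sum.cong refl) (auto simp: children_def T_def)
  finally show ?thesis .
qed

lemma sum_T_split: "(\<Sum>w\<in>T. g w) = (\<Sum>w\<in>children a. g w) + (\<Sum>w\<in>{w\<in>T. parent w \<noteq> a}. (g w :: real))"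
proof -
  have "T = children a \<union> {w\<in>T. parent w \<noteq> a}" "children a \<inter> {w\<in>T. parent w \<noteq> a} = {}"
    by (auto simp: children_def)
  then show ?thesis using finite_T finite_children by (metis (no_types, lifting) finite_Un sum.union_disjoint)
qed

lemma gram_row_a: "(\<Sum>w<n. gram a w * \<alpha> w) = - \<alpha> b - child_sum \<alpha> a - 2 * deep_sum \<alpha>"
proof -
  have "(\<Sum>w\<in>T. gram a w * \<alpha> w) = (\<Sum>w\<in>children a. - \<alpha> w) + (\<Sum>w\<in>{w\<in>T. parent w \<noteq> a}. -2 * \<alpha> w)"
    unfolding sum_T_split
    by (intro arg_cong2[where f="(+)"] sum.cong refl) (auto simp: gram_def children_def T_def)
  then show ?thesis unfolding sum_vertices using triangle_distinct parent_b
    by (simp add: gram_def child_sum_def deep_sum_def sum_negf sum_distrib_left[symmetric])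
qed

lemma gram_row_b: "(\<Sum>w<n. gram b w * \<alpha> w) = - \<alpha> a - \<alpha> c - 2 * \<alpha> b + 2 * child_sum \<alpha> a"
proof -
  have "(\<Sum>w\<in>T. gram b w * \<alpha> w) = (\<Sum>w\<in>T. (if parent w = a then 2 * \<alpha> w else 0))"
    by (intro sum.cong refl) (use triangle_distinct in \<open>auto simp: gram_def T_def parent_b\<close>)
  also have "\<dots> = 2 * child_sum \<alpha> a" unfolding child_sum_def children_def using finite_T
    by (simp add: sum.If_cases sum_distrib_left Int_def)
  finally show ?thesis unfolding sum_vertices using triangle_distinct parent_b by (simp add: gram_def)
qed

lemma gram_row_c: "(\<Sum>w<n. gram c w * \<alpha> w) = - \<alpha> b - 2 * \<alpha> c"
proof -
  have "(\<Sum>w\<in>T. gram c w * \<alpha> w) = 0"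
    by (intro sum.neutral) (use triangle_distinct in \<open>auto simp: gram_def T_def\<close>)
  then show ?thesis unfolding sum_vertices using triangle_distinct by (simp add: gram_def)
qed

lemma gram_row_T:
  assumes v: "v \<in> T"
  shows "(\<Sum>w<n. gram v w * \<alpha> w) = (if parent v = a then - \<alpha> a + 2 * \<alpha> b else - 2 * \<alpha> a)
     - 4 * \<alpha> v + (if parent v = a then 2 else 4) * child_sum \<alpha> (parent v)"
proof -
  have vn: "v \<noteq> a" "v \<noteq> b" "v \<noteq> c" "v < n" using T_D[OF v] by auto
  have "(\<Sum>w\<in>T. gram v w * \<alpha> w) = (\<Sum>w\<in>T. (if v = w then -4 * \<alpha> w else 0))
      + (\<Sum>w\<in>T. (if parent w = parent v then (if parent v = a then 2 else 4) * \<alpha> w else 0))"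
    by (subst sum.distrib[symmetric], intro sum.cong refl) (use vn in \<open>auto simp: gram_def T_def\<close>)
  also have "(\<Sum>w\<in>T. (if v = w then -4 * \<alpha> w else 0)) = -4 * \<alpha> v"
    using v finite_T by simp
  also have "(\<Sum>w\<in>T. (if parent w = parent v then (if parent v = a then 2 else 4) * \<alpha> w else 0))
      = (\<Sum>w\<in>{w\<in>T. parent w = parent v}. (if parent v = a then 2 else 4) * \<alpha> w)"
    using finite_T by (simp add: sum.inter_filter)
  also have "\<dots> = (if parent v = a then 2 else 4) * child_sum \<alpha> (parent v)"
    unfolding child_sum_def children_def by (simp add: sum_distrib_left)
  finally show ?thesis unfolding sum_vertices using vn triangle_distinct parent_b by (simp add: gram_def)
qed

lemma gram_rows_T:
  "(\<Sum>v\<in>T. \<alpha> v * (\<Sum>w<n. gram v w * \<alpha> w))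
    = (- \<alpha> a + 2 * \<alpha> b + 2 * child_sum \<alpha> a) * child_sum \<alpha> a - 2 * \<alpha> a * deep_sum \<alpha>
      - 4 * (\<Sum>w\<in>T. \<alpha> w ^ 2) + 4 * (\<Sum>x\<in>T. child_sum \<alpha> x ^ 2)"
proof -
  let ?D = "{w\<in>T. parent w \<noteq> a}"
  have "(\<Sum>v\<in>T. \<alpha> v * (\<Sum>w<n. gram v w * \<alpha> w))
      = (\<Sum>v\<in>children a. \<alpha> v * (- \<alpha> a + 2 * \<alpha> b - 4 * \<alpha> v + 2 * child_sum \<alpha> a))
      + (\<Sum>v\<in>?D. \<alpha> v * (- 2 * \<alpha> a - 4 * \<alpha> v + 4 * child_sum \<alpha> (parent v)))"
    unfolding sum_T_split by (intro arg_cong2[where f="(+)"] sum.cong refl) (auto simp: gram_row_T children_def)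
  also have "(\<Sum>v\<in>children a. \<alpha> v * (- \<alpha> a + 2 * \<alpha> b - 4 * \<alpha> v + 2 * child_sum \<alpha> a))
      = (- \<alpha> a + 2 * \<alpha> b + 2 * child_sum \<alpha> a) * child_sum \<alpha> a - 4 * (\<Sum>v\<in>children a. \<alpha> v ^ 2)"
    unfolding child_sum_def
    by (simp add: algebra_simps sum.distrib sum_subtractf sum_distrib_left power2_eq_square)
  also have "(\<Sum>v\<in>?D. \<alpha> v * (- 2 * \<alpha> a - 4 * \<alpha> v + 4 * child_sum \<alpha> (parent v)))
      = (\<Sum>v\<in>?D. (-2 * \<alpha> a) * \<alpha> v) + (\<Sum>v\<in>?D. (-4) * \<alpha> v ^ 2)
        + (\<Sum>v\<in>?D. 4 * (\<alpha> v * child_sum \<alpha> (parent v)))"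
    by (simp add: sum.distrib[symmetric] algebra_simps power2_eq_square)
  also have "\<dots> = - 2 * \<alpha> a * deep_sum \<alpha> - 4 * (\<Sum>v\<in>?D. \<alpha> v ^ 2)
      + 4 * (\<Sum>v\<in>?D. \<alpha> v * child_sum \<alpha> (parent v))"
    unfolding deep_sum_def by (simp add: sum_distrib_left[symmetric] sum_negf)
  also have "(\<Sum>v\<in>?D. \<alpha> v * child_sum \<alpha> (parent v)) = (\<Sum>x\<in>T. child_sum \<alpha> x ^ 2)"
    unfolding sum_deep_by_parent
    by (intro sum.cong refl) (simp add: children_def child_sum_def power2_eq_square sum_distrib_right)
  finally show ?thesis using sum_T_split[of "\<lambda>w. \<alpha> w ^ 2"] by (simp add: algebra_simps)
qed

lemma gram_form_explicit:
  "gram_form \<alpha> = -2 * \<alpha> c ^ 2 - 2 * \<alpha> c * \<alpha> b - 2 * \<alpha> a * (child_sum \<alpha> a + \<alpha> b)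
    - 4 * \<alpha> a * deep_sum \<alpha> - 4 * \<alpha> b ^ 2 - 4 * (\<Sum>w\<in>T. \<alpha> w ^ 2)
    + 2 * (child_sum \<alpha> a + \<alpha> b) ^ 2 + 4 * (\<Sum>x\<in>T. child_sum \<alpha> x ^ 2)"
proof -
  have "gram_form \<alpha> = (\<Sum>v<n. \<alpha> v * (\<Sum>w<n. gram v w * \<alpha> w))"
    unfolding gram_form_def by (simp add: sum_distrib_left mult_ac)
  also have "\<dots> = \<alpha> a * (\<Sum>w<n. gram a w * \<alpha> w) + \<alpha> b * (\<Sum>w<n. gram b w * \<alpha> w)
      + \<alpha> c * (\<Sum>w<n. gram c w * \<alpha> w) + (\<Sum>v\<in>T. \<alpha> v * (\<Sum>w<n. gram v w * \<alpha> w))"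
    by (rule sum_vertices)
  finally show ?thesis unfolding gram_row_a gram_row_b gram_row_c gram_rows_T
    by (simp add: algebra_simps power2_eq_square)
qed

lemma trans_mat_explicit:
  shows "trans_mat a x = (if x = a then 1 else 0)"
    and "trans_mat c x = (if x = c then 1 else 0) - (if x = b then 1 else 0)"
    and "v \<noteq> a \<Longrightarrow> v \<noteq> c \<Longrightarrow> parent v = a \<Longrightarrow>
      trans_mat v x = (if x = a then 1 else 0) - (if x = v then 1 else 0)"
    and "v \<noteq> a \<Longrightarrow> v \<noteq> c \<Longrightarrow> parent v \<noteq> a \<Longrightarrow> trans_mat v x
      = 2 * (if x = parent v then 1 else 0) - (if x = v then 1 else 0) - (if x = parent (parent v) then 1 else 0)"
  using triangle_distinct by (auto simp: trans_mat_def row_op_def)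

lemma trans_mat_T_self: assumes y: "y \<in> T" shows "trans_mat y y = -1"
proof -
  have yn: "y \<noteq> a" "y \<noteq> c" "y < n" using T_D[OF y] by auto
  show ?thesis
  proof (cases "parent y = a")
    case True
    then show ?thesis using trans_mat_explicit(3)[OF yn(1,2) True, of y] yn by simp
  next
    case False
    have "parent y \<noteq> y" "parent (parent y) \<noteq> y"
      using parent(3)[OF yn(3) yn(1)] depth_parent[OF parent_lt[OF yn(3)]] by auto
    then show ?thesis using trans_mat_explicit(4)[OF yn(1,2) False, of y] by simp
  qed
qed

lemma trans_mat_T_not_below:
  assumes v: "v < n" "v \<noteq> y" and y: "y \<in> T" and depth: "v \<in> T \<Longrightarrow> depth v \<le> depth y"
  shows "trans_mat v y = 0"
  using v(1)
proof (cases rule: vertex_cases)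
  case 3
  then show ?thesis using trans_mat_explicit(3)[OF 3] T_D[OF y] v by simp
next
  case 4
  have "depth (parent v) < depth y" using parent(3)[of v] T_D[OF 4(1)] depth[OF 4(1)] by simp
  moreover have "depth (parent (parent v)) < depth y"
    using depth_parent parent_lt T_D[OF 4(1)] \<open>depth (parent v) < depth y\<close> by auto
  ultimately show ?thesis using trans_mat_explicit(4)[of v y] 4 T_D[OF 4(1)] v by auto
qed (use trans_mat_explicit T_D[OF y] in auto)

lemma grandparent_not_b_c:
  assumes "v \<in> T" "parent v \<noteq> a"
  shows "parent v \<noteq> b" "parent v \<noteq> c" "parent (parent v) \<noteq> b" "parent (parent v) \<noteq> c"
  using deep_vertex[OF assms] parent_T[of "parent v"] T_D triangle_distinct by auto

lemma trans_mat_at_c: assumes v: "v < n" shows "trans_mat v c = (if v = c then 1 else 0)"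
  using v
proof (cases rule: vertex_cases)
  case 4
  then show ?thesis using trans_mat_explicit(4)[of v c] grandparent_not_b_c[OF 4] T_D[OF 4(1)] by simp
qed (use trans_mat_explicit triangle_distinct in auto)

lemma trans_mat_at_b: assumes v: "v < n" shows "trans_mat v b = (if v = c \<or> v = b then -1 else 0)"
  using v
proof (cases rule: vertex_cases)
  case 4
  then show ?thesis using trans_mat_explicit(4)[of v b] grandparent_not_b_c[OF 4] T_D[OF 4(1)] by simp
qed (use trans_mat_explicit triangle_distinct parent_b in auto)

text \<open>Look at a deepest vertex of T with nonzero coefficient.\<close>
lemma trans_mat_combination_zero_T:
  assumes z: "\<And>x. x < n \<Longrightarrow> (\<Sum>v<n. \<alpha> v * trans_mat v x) = 0"
  shows "\<forall>y\<in>T. \<alpha> y = 0"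
proof (rule ccontr)
  assume "\<not> (\<forall>y\<in>T. \<alpha> y = 0)"
  then have ne: "{y\<in>T. \<alpha> y \<noteq> 0} \<noteq> {}" by auto
  have fin: "finite {y\<in>T. \<alpha> y \<noteq> 0}" using finite_T by simp
  have "Max (depth ` {y\<in>T. \<alpha> y \<noteq> 0}) \<in> depth ` {y\<in>T. \<alpha> y \<noteq> 0}"
    using fin ne by (intro Max_in) auto
  then obtain y where y: "y \<in> T" "\<alpha> y \<noteq> 0" "depth y = Max (depth ` {y\<in>T. \<alpha> y \<noteq> 0})"
    by auto
  have deepest: "\<And>z. z \<in> T \<Longrightarrow> \<alpha> z \<noteq> 0 \<Longrightarrow> depth z \<le> depth y" using fin y(3) by auto
  have "(\<Sum>v<n. \<alpha> v * trans_mat v y) = (\<Sum>v<n. if v = y then - \<alpha> y else 0)"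
  proof (intro sum.cong refl)
    fix v assume "v \<in> {..<n}"
    then have "v \<noteq> y \<Longrightarrow> \<alpha> v \<noteq> 0 \<Longrightarrow> trans_mat v y = 0"
      using trans_mat_T_not_below[OF _ _ y(1)] deepest by auto
    then show "\<alpha> v * trans_mat v y = (if v = y then - \<alpha> y else 0)"
      using trans_mat_T_self[OF y(1)] by auto
  qed
  also have "\<dots> = - \<alpha> y" using T_D[OF y(1)] by simp
  finally show False using z T_D[OF y(1)] y(2) by simp
qed

lemma trans_mat_independent:
  assumes z: "\<And>x. x < n \<Longrightarrow> (\<Sum>v<n. \<alpha> v * trans_mat v x) = 0"
  shows "\<forall>v<n. \<alpha> v = 0"
proof -
  have "(\<Sum>v<n. \<alpha> v * trans_mat v c) = \<alpha> c" using tri by (simp add: trans_mat_at_c if_distrib cong: if_cong)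
  then have ac: "\<alpha> c = 0" using z[of c] tri by simp
  have "(\<Sum>v<n. \<alpha> v * trans_mat v b) = (\<Sum>v<n. (if v = c then - \<alpha> c else 0) + (if v = b then - \<alpha> b else 0))"
    using trans_mat_at_b triangle_distinct by (intro sum.cong refl) auto
  also have "\<dots> = - \<alpha> c - \<alpha> b" using tri by (simp add: sum.distrib)
  finally have ab: "\<alpha> b = 0" using z[of b] tri ac by simp
  have aT: "\<forall>y\<in>T. \<alpha> y = 0" by (rule trans_mat_combination_zero_T[OF z])
  have "(\<Sum>v<n. \<alpha> v * trans_mat v a) = (\<Sum>v<n. if v = a then \<alpha> a else 0)"
    using ac ab aT trans_mat_explicit(1) by (intro sum.cong refl) (auto simp: T_def)
  then have "\<alpha> a = 0" using z[of a] tri by simp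
  then show ?thesis using ab ac aT by (auto simp: T_def)
qed

section \<open>Counting leaves\<close>

lemma card_vertices: "n = card T + 3"
proof -
  have "{..<n} = insert a (insert b (insert c T))" using tri by (auto simp: T_def)
  moreover have "a \<notin> T" "b \<notin> T" "c \<notin> T" by (auto simp: T_def)
  ultimately have "card {..<n} = card T + 3" using triangle_distinct finite_T by simp
  then show ?thesis by simp
qed

lemma neighbours_T:
  assumes v: "v \<in> T"
  shows "{w. w < n \<and> E v w} = insert (parent v) (children v)" and "parent v \<notin> children v"
proof -
  have vn: "v < n" "v \<noteq> a" using T_D[OF v] by auto
  have "E v w" if "w \<in> children v" for w
  proof -
    have wn: "w < n" "w \<noteq> a" "parent w = v" using that T_D by (auto simp: children_def)
    then show ?thesis using parent(2)[OF wn(1,2)] sym vn by auto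
  qed
  moreover have "{w. w < n \<and> E v w} \<subseteq> insert (parent v) (children v)"
    using neighbour_T[OF v] by (auto simp: children_def)
  ultimately show "{w. w < n \<and> E v w} = insert (parent v) (children v)"
    using parent[OF vn] children_T T_D by blast
  show "parent v \<notin> children v"
  proof
    assume "parent v \<in> children v"
    then have "parent (parent v) = v" "parent v \<in> T" by (auto simp: children_def)
    then show False using parent(3)[OF vn] parent(3)[of "parent v"] T_D by fastforce
  qed
qed

lemma degree_T: "v \<in> T \<Longrightarrow> degree E n v = Suc (card (children v))"
  unfolding degree_def using neighbours_T finite_children by simp

lemma leaves_eq: "leaves E n = {v \<in> T. children v = {}}"
proof
  have "card {b, c} \<le> degree E n a" unfolding degree_def
    using triangle_edges tri by (intro card_mono) auto
  then have "degree E n a \<ge> 2" using triangle_distinct by simp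
  show "leaves E n \<subseteq> {v \<in> T. children v = {}}"
  proof
    fix v assume "v \<in> leaves E n"
    then have v: "v < n" "degree E n v = 1" by (auto simp: leaves_def)
    then have "v \<in> T" using \<open>degree E n a \<ge> 2\<close> deg_b deg_c by (auto simp: T_def)
    then show "v \<in> {v \<in> T. children v = {}}" using degree_T v finite_children by auto
  qed
  show "{v \<in> T. children v = {}} \<subseteq> leaves E n"
    using degree_T T_D by (auto simp: leaves_def)
qed

definition first_child where "first_child x = Min (children x)"

definition first_children where "first_children = {y \<in> T. y = first_child (parent y)}"

lemma first_child: "children x \<noteq> {} \<Longrightarrow> first_child x \<in> T \<and> parent (first_child x) = x"
  using Min_in[OF finite_children] by (fastforce simp: first_child_def children_def)

lemma first_children_T: "first_children \<subseteq> T" by (auto simp: first_children_def)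

lemma card_first_children:
  assumes "children a \<noteq> {}"
  shows "card first_children = card {v \<in> T. children v \<noteq> {}} + 1"
proof -
  define P where "P = {x. (x \<in> T \<or> x = a) \<and> children x \<noteq> {}}"
  have "bij_betw first_child P first_children"
  proof (rule bij_betwI[where g = parent])
    show "first_child \<in> P \<rightarrow> first_children" using first_child by (auto simp: P_def first_children_def)
    show "parent \<in> first_children \<rightarrow> P"
      using parent_T by (auto simp: P_def first_children_def children_def)
    show "parent (first_child x) = x" if "x \<in> P" for x using first_child that by (auto simp: P_def)
    show "first_child (parent y) = y" if "y \<in> first_children" for y
      using that by (simp add: first_children_def)
  qed
  then have "card first_children = card P" by (simp add: bij_betw_same_card)
  moreover have "P = insert a {v \<in> T. children v \<noteq> {}}" "a \<notin> {v \<in> T. children v \<noteq> {}}"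
    using assms by (auto simp: P_def T_def)
  ultimately show ?thesis using finite_T by simp
qed

lemma exists_leaf: assumes "T \<noteq> {}" shows "{v \<in> T. children v = {}} \<noteq> {}"
proof -
  have "Max (depth ` T) \<in> depth ` T" using finite_T assms by (intro Max_in) auto
  then obtain y where y: "y \<in> T" "depth y = Max (depth ` T)" by auto
  have "children y = {}"
  proof (rule ccontr)
    assume "children y \<noteq> {}"
    then obtain w where w: "w \<in> T" "parent w = y" by (auto simp: children_def)
    then have "depth y + 1 = depth w" using parent(3)[of w] T_D[OF w(1)] by simp
    moreover have "depth w \<le> depth y" using finite_T w y by simp
    ultimately show False by simp
  qed
  then show ?thesis using y by auto
qed

lemma T_empty_if_no_children_a: assumes "children a = {}" shows "T = {}"
proof (rule ccontr)
  assume ne: "T \<noteq> {}"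
  have "Min (depth ` T) \<in> depth ` T" using finite_T ne by (intro Min_in) auto
  then obtain y where y: "y \<in> T" "depth y = Min (depth ` T)" by auto
  then have "parent y \<in> T" using assms parent_T[OF y(1)] by (auto simp: children_def)
  then have "depth y \<le> depth (parent y)" using finite_T y by simp
  moreover have "depth (parent y) + 1 = depth y" using parent(3)[of y] T_D[OF y(1)] by simp
  ultimately show False by simp
qed

lemma card_leaves_first_children:
  assumes "children a \<noteq> {}"
  shows "card ({a, b, c} \<union> (T - first_children)) = card (leaves E n) + 2"
    and "card ({a, b, c} \<union> (T - first_children)) + card first_children = n"
proof -
  have fin: "finite first_children" using finite_T first_children_T finite_subset by blast
  have "{a, b, c} \<inter> (T - first_children) = {}" by (auto simp: T_def)
  then have card: "card ({a, b, c} \<union> (T - first_children)) = 3 + (card T - card first_children)"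
    using triangle_distinct finite_T card_Diff_subset[OF fin first_children_T] by (simp add: card_Un_disjoint)
  have "T = {v \<in> T. children v = {}} \<union> {v \<in> T. children v \<noteq> {}}" by auto
  then have "card T = card {v \<in> T. children v = {}} + card {v \<in> T. children v \<noteq> {}}"
    using finite_T by (metis (no_types, lifting) card_Un_disjoint disjoint_iff finite_Un mem_Collect_eq)
  moreover have "T \<noteq> {}" using assms children_T by blast
  then have "card {v \<in> T. children v = {}} \<ge> 1"
    using exists_leaf finite_T by (simp add: Suc_leI card_gt_0_iff)
  ultimately show "card ({a, b, c} \<union> (T - first_children)) = card (leaves E n) + 2"
    unfolding card leaves_eq using card_first_children[OF assms] by simp
  show "card ({a, b, c} \<union> (T - first_children)) + card first_children = n"
    unfolding card using card_vertices card_mono[OF finite_T first_children_T] by simp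
qed

section \<open>A negative definite and a positive semidefinite subspace\<close>

lemma first_child_parent: "i \<in> T \<Longrightarrow> first_child (parent i) \<in> T \<and> parent (first_child (parent i)) = parent i"
  using first_child[of "parent i"] by (auto simp: children_def)

lemma first_child_parent_not_later:
  assumes "i \<in> T" "y \<in> T - first_children" shows "first_child (parent i) \<noteq> y"
  using first_child_parent[OF assms(1)] assms(2) by (auto simp: first_children_def)

text \<open>In the coordinates of the rows of trans_mat, these vectors span a space of dimension
  card (leaves E n) + 2 on which the distance squared matrix is negative definite.\<close>
definition neg_vec :: "nat \<Rightarrow> nat \<Rightarrow> real" where
  "neg_vec i v = (if i = a then 2 * real (card (children a)) * of_bool (v = a) + of_bool (v \<in> children a)
     else if i = b \<or> i = c then of_bool (v = i)
     else of_bool (v = i) - of_bool (v = first_child (parent i)))"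

lemma sum_neg_index:
  "(\<Sum>i\<in>{a, b, c} \<union> (T - first_children). f i) = f a + f b + f c + (\<Sum>i\<in>T - first_children. (f i :: real))"
  using triangle_distinct finite_T by (simp add: T_def)

lemma neg_combination:
  fixes \<beta> :: "nat \<Rightarrow> real"
  defines "\<alpha> \<equiv> \<lambda>v. \<Sum>i\<in>{a, b, c} \<union> (T - first_children). \<beta> i * neg_vec i v"
  shows "\<alpha> a = 2 * real (card (children a)) * \<beta> a" "\<alpha> b = \<beta> b" "\<alpha> c = \<beta> c"
    and "\<And>y. y \<in> T - first_children \<Longrightarrow> \<alpha> y = (if parent y = a then \<beta> a else 0) + \<beta> y"
proof -
  have later: "neg_vec i v = of_bool (v = i) - of_bool (v = first_child (parent i))" if "i \<in> T" for i v
    using T_D[OF that] by (simp add: neg_vec_def)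
  have fc: "v \<noteq> first_child (parent i)" "v \<noteq> i" if "i \<in> T" "v \<in> {a, b, c}" for i v
    using first_child_parent[OF that(1)] T_D that by auto
  have abc: "(\<Sum>i\<in>T - first_children. \<beta> i * neg_vec i v) = 0" if "v \<in> {a, b, c}" for v
    using that fc by (intro sum.neutral) (auto simp: later)
  have "a \<notin> children a" "b \<notin> children a" "c \<notin> children a" using children_T T_D by blast+
  then show "\<alpha> a = 2 * real (card (children a)) * \<beta> a" "\<alpha> b = \<beta> b" "\<alpha> c = \<beta> c"
    unfolding \<alpha>_def sum_neg_index using abc triangle_distinct by (simp_all add: neg_vec_def)
  fix y assume y: "y \<in> T - first_children"
  have "(\<Sum>i\<in>T - first_children. \<beta> i * neg_vec i y) = (\<Sum>i\<in>T - first_children. if i = y then \<beta> i else 0)"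
    using first_child_parent_not_later[OF _ y] y by (intro sum.cong refl) (auto simp: later first_children_def)
  also have "\<dots> = \<beta> y" using y finite_T by simp
  moreover have "neg_vec a y = of_bool (parent y = a)" "neg_vec b y = 0" "neg_vec c y = 0"
    using y T_D triangle_distinct by (auto simp: neg_vec_def children_def)
  ultimately show "\<alpha> y = (if parent y = a then \<beta> a else 0) + \<beta> y"
    unfolding \<alpha>_def sum_neg_index by simp
qed

lemma neg_combination_child_sum:
  fixes \<beta> :: "nat \<Rightarrow> real"
  defines "\<alpha> \<equiv> \<lambda>v. \<Sum>i\<in>{a, b, c} \<union> (T - first_children). \<beta> i * neg_vec i v"
  assumes x: "x \<in> T \<or> x = a"
  shows "child_sum \<alpha> x = (if x = a then real (card (children a)) * \<beta> a else 0)"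
proof -
  have swap: "child_sum \<alpha> x = (\<Sum>i\<in>{a, b, c} \<union> (T - first_children). \<beta> i * (\<Sum>w\<in>children x. neg_vec i w))"
    unfolding child_sum_def \<alpha>_def by (simp add: sum_distrib_left sum.swap[of _ "children x"])
  have later: "(\<Sum>w\<in>children x. neg_vec i w) = 0" if i: "i \<in> T - first_children" for i
  proof -
    have iT: "i \<in> T" using i by simp
    have "(\<Sum>w\<in>children x. neg_vec i w)
        = of_bool (i \<in> children x) - of_bool (first_child (parent i) \<in> children x)"
      using T_D[OF iT] finite_children by (simp add: neg_vec_def sum_subtractf of_bool_def)
    also have "first_child (parent i) \<in> children x \<longleftrightarrow> i \<in> children x"
      using first_child_parent[OF iT] iT by (simp add: children_def)
    finally show ?thesis by simp
  qed
  have ch: "w \<noteq> a \<and> w \<noteq> b \<and> w \<noteq> c" if "w \<in> children y" for w y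
    using that children_T T_D by blast
  have "(\<Sum>w\<in>children x. neg_vec b w) = 0" "(\<Sum>w\<in>children x. neg_vec c w) = 0"
    using triangle_distinct by (auto simp: neg_vec_def dest: ch intro!: sum.neutral)
  moreover have "(\<Sum>w\<in>children x. neg_vec a w) = (if x = a then real (card (children a)) else 0)"
  proof -
    have "(\<Sum>w\<in>children x. neg_vec a w) = (\<Sum>w\<in>children x. of_bool (w \<in> children a))"
      by (intro sum.cong refl) (auto simp: neg_vec_def dest: ch)
    also have "\<dots> = (if x = a then real (card (children a)) else 0)"
      by (cases "x = a") (auto simp: children_def intro!: sum.neutral)
    finally show ?thesis .
  qed
  ultimately show ?thesis unfolding swap sum_neg_index using later by simp
qed

lemma sq_add_mult_add_sq_pos: "(x :: real) \<noteq> 0 \<or> y \<noteq> 0 \<Longrightarrow> x ^ 2 + x * y + y ^ 2 > 0"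
proof -
  assume "x \<noteq> 0 \<or> y \<noteq> 0"
  then have "(2 * x + y) ^ 2 + 3 * y ^ 2 > 0" by (cases "y = 0") (auto simp: add_pos_nonneg add_nonneg_pos)
  moreover have "4 * (x ^ 2 + x * y + y ^ 2) = (2 * x + y) ^ 2 + 3 * y ^ 2" by (simp add: power2_eq_square algebra_simps)
  ultimately show ?thesis by simp
qed

lemma gram_form_neg_combination:
  assumes cha: "children a \<noteq> {}" and nz: "\<exists>i\<in>{a, b, c} \<union> (T - first_children). \<beta> i \<noteq> 0"
  shows "gram_form (\<lambda>v. \<Sum>i\<in>{a, b, c} \<union> (T - first_children). \<beta> i * neg_vec i v) < 0"
proof -
  define \<alpha> where "\<alpha> = (\<lambda>v. \<Sum>i\<in>{a, b, c} \<union> (T - first_children). \<beta> i * neg_vec i v)"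
  define k where "k = real (card (children a))"
  have coords: "\<alpha> a = 2 * k * \<beta> a" "\<alpha> b = \<beta> b" "\<alpha> c = \<beta> c"
    "\<And>y. y \<in> T - first_children \<Longrightarrow> \<alpha> y = (if parent y = a then \<beta> a else 0) + \<beta> y"
    unfolding \<alpha>_def k_def using neg_combination[where \<beta> = \<beta>] by simp_all
  have sa: "child_sum \<alpha> a = k * \<beta> a"
    using neg_combination_child_sum[where x = a and \<beta> = \<beta>] unfolding \<alpha>_def k_def by simp
  have sx: "child_sum \<alpha> x = 0" if "x \<in> T" for x
    using neg_combination_child_sum[where x = x and \<beta> = \<beta>] that T_D unfolding \<alpha>_def by auto
  have "deep_sum \<alpha> = 0" unfolding deep_sum_def sum_deep_by_parent using sx by (simp add: child_sum_def)
  define q where "q = \<beta> c ^ 2 + \<beta> c * \<beta> b + \<beta> b ^ 2"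
  define K where "K = k ^ 2 * \<beta> a ^ 2"
  define S where "S = (\<Sum>w\<in>T. \<alpha> w ^ 2)"
  have Q: "gram_form \<alpha> = -2 * q - 2 * K - 4 * S"
    unfolding gram_form_explicit q_def K_def S_def using \<open>deep_sum \<alpha> = 0\<close> sx coords(1-3)
    by (simp add: sa power2_eq_square algebra_simps)
  have "k \<ge> 1" using cha finite_children by (simp add: k_def Suc_leI card_gt_0_iff)
  have S: "S \<ge> 0" unfolding S_def by (intro sum_nonneg) auto
  have q: "q \<ge> 0" using sq_add_mult_add_sq_pos[of "\<beta> c" "\<beta> b"] unfolding q_def by fastforce
  have K: "K \<ge> 0" unfolding K_def by simp
  consider "\<beta> c \<noteq> 0 \<or> \<beta> b \<noteq> 0" | "\<beta> b = 0" "\<beta> c = 0" "\<beta> a \<noteq> 0" | "\<beta> a = 0" "\<beta> b = 0" "\<beta> c = 0"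
    by blast
  then show ?thesis
  proof cases
    case 1
    then have "q > 0" using sq_add_mult_add_sq_pos[of "\<beta> c" "\<beta> b"] unfolding q_def by simp
    then show ?thesis using Q S K unfolding \<alpha>_def by linarith
  next
    case 2
    then have "K > 0" using \<open>k \<ge> 1\<close> unfolding K_def by simp
    then show ?thesis using Q S q unfolding \<alpha>_def by linarith
  next
    case 3
    then obtain y where y: "y \<in> T - first_children" "\<beta> y \<noteq> 0" using nz by auto
    then have "\<alpha> y ^ 2 > 0" using coords(4)[OF y(1)] 3 by simp
    then have "S > 0" unfolding S_def using y(1) finite_T by (intro sum_pos2) auto
    then show ?thesis using Q q K unfolding \<alpha>_def by linarith
  qed
qed

text \<open>In the coordinates of the rows of trans_mat, these vectors span a space of dimension
  card first_children on which the distance squared matrix is positive semidefinite.\<close>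
definition psd_vec :: "nat \<Rightarrow> nat \<Rightarrow> real" where
  "psd_vec y v = (if parent y = a then 4 * of_bool (v = b) - 2 * of_bool (v = c) + 3 * of_bool (v \<in> children a)
     else of_bool (v \<in> children (parent y)))"

lemma first_children_with_parent:
  assumes "children x \<noteq> {}" shows "{y \<in> first_children. parent y = x} = {first_child x}"
  using first_child[OF assms] by (auto simp: first_children_def)

lemma sum_first_children_with_parent:
  assumes "children x \<noteq> {}"
  shows "(\<Sum>y\<in>first_children. if parent y = x then f y else 0) = (f (first_child x) :: real)"
  using first_children_with_parent[OF assms] finite_subset[OF first_children_T finite_T]
  by (simp add: sum.inter_filter[symmetric])

lemma psd_combination:
  fixes \<gamma> :: "nat \<Rightarrow> real"
  assumes cha: "children a \<noteq> {}"
  defines "\<alpha> \<equiv> \<lambda>v. \<Sum>y\<in>first_children. \<gamma> y * psd_vec y v"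
  shows "\<alpha> a = 0" "\<alpha> b = 4 * \<gamma> (first_child a)" "\<alpha> c = -2 * \<gamma> (first_child a)"
    and "\<And>v. v \<in> T \<Longrightarrow> \<alpha> v = (if parent v = a then 3 else 1) * \<gamma> (first_child (parent v))"
proof -
  have abc: "a \<notin> children x" "b \<notin> children x" "c \<notin> children x" for x
    using children_T T_D by blast+
  show "\<alpha> a = 0" unfolding \<alpha>_def using triangle_distinct
    by (intro sum.neutral) (auto simp: psd_vec_def abc)
  have "\<alpha> b = (\<Sum>y\<in>first_children. if parent y = a then 4 * \<gamma> y else 0)"
    unfolding \<alpha>_def using triangle_distinct abc by (intro sum.cong refl) (simp add: psd_vec_def)
  then show "\<alpha> b = 4 * \<gamma> (first_child a)" using sum_first_children_with_parent[OF cha] by simp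
  have "\<alpha> c = (\<Sum>y\<in>first_children. if parent y = a then -2 * \<gamma> y else 0)"
    unfolding \<alpha>_def using triangle_distinct abc by (intro sum.cong refl) (simp add: psd_vec_def)
  then show "\<alpha> c = -2 * \<gamma> (first_child a)" using sum_first_children_with_parent[OF cha] by simp
  fix v assume v: "v \<in> T"
  have "\<alpha> v = (\<Sum>y\<in>first_children.
      if parent y = parent v then (if parent v = a then 3 else 1) * \<gamma> y else 0)"
    unfolding \<alpha>_def using v T_D by (intro sum.cong refl) (auto simp: psd_vec_def children_def)
  also have "\<dots> = (if parent v = a then 3 else 1) * \<gamma> (first_child (parent v))"
    using v by (intro sum_first_children_with_parent) (auto simp: children_def)
  finally show "\<alpha> v = (if parent v = a then 3 else 1) * \<gamma> (first_child (parent v))" .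
qed

lemma gram_form_psd_combination:
  fixes \<gamma> :: "nat \<Rightarrow> real"
  assumes cha: "children a \<noteq> {}"
  shows "gram_form (\<lambda>v. \<Sum>y\<in>first_children. \<gamma> y * psd_vec y v) \<ge> 0"
proof -
  define \<alpha> where "\<alpha> = (\<lambda>v. \<Sum>y\<in>first_children. \<gamma> y * psd_vec y v)"
  define g where "g = \<gamma> (first_child a)"
  define k where "k = real (card (children a))"
  define m where "m x = real (card (children x))" for x
  have coords: "\<alpha> a = 0" "\<alpha> b = 4 * g" "\<alpha> c = -2 * g"
    "\<And>v. v \<in> T \<Longrightarrow> \<alpha> v = (if parent v = a then 3 else 1) * \<gamma> (first_child (parent v))"
    unfolding \<alpha>_def g_def using psd_combination[OF cha, where \<gamma> = \<gamma>] by simp_all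
  have ch: "v \<in> T \<and> parent v = x" if "v \<in> children x" for v x using that by (simp add: children_def)
  have sa: "child_sum \<alpha> a = 3 * k * g"
    unfolding child_sum_def k_def g_def using coords(4) by (simp add: ch cong: sum.cong)
  have sx: "child_sum \<alpha> x = m x * \<gamma> (first_child x)" if "x \<in> T" for x
    unfolding child_sum_def m_def using coords(4) that T_D by (simp add: ch cong: sum.cong)
  have "(\<Sum>w\<in>{w\<in>T. parent w \<noteq> a}. \<alpha> w ^ 2) = (\<Sum>x\<in>T. m x * \<gamma> (first_child x) ^ 2)"
    unfolding sum_deep_by_parent m_def using coords(4) T_D by (simp add: ch cong: sum.cong)
  moreover have "(\<Sum>w\<in>children a. \<alpha> w ^ 2) = 9 * k * g ^ 2"
    unfolding k_def g_def using coords(4) by (simp add: ch power2_eq_square cong: sum.cong)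
  ultimately have sq: "(\<Sum>w\<in>T. \<alpha> w ^ 2) = 9 * k * g ^ 2 + (\<Sum>x\<in>T. m x * \<gamma> (first_child x) ^ 2)"
    using sum_T_split[of "\<lambda>w. \<alpha> w ^ 2"] by simp
  have "gram_form \<alpha> = (18 * k ^ 2 + 12 * k - 24) * g ^ 2
      + (\<Sum>x\<in>T. 4 * (m x ^ 2 - m x) * \<gamma> (first_child x) ^ 2)"
    unfolding gram_form_explicit sq sa coords(1-3) using sx
    by (simp add: power_mult_distrib algebra_simps power2_eq_square sum_subtractf sum.distrib
      sum_distrib_left)
  moreover have "k \<ge> 1" using cha finite_children by (simp add: k_def Suc_leI card_gt_0_iff)
  then have "k * k \<ge> 1 * 1" by (intro mult_mono) auto
  then have "18 * k ^ 2 + 12 * k - 24 \<ge> 0" using \<open>k \<ge> 1\<close> by (simp add: power2_eq_square)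
  moreover have "m x ^ 2 - m x \<ge> 0" for x
    by (cases "card (children x)") (simp_all add: m_def power2_eq_square)
  ultimately show ?thesis unfolding \<alpha>_def by (simp add: sum_nonneg)
qed

lemma psd_combination_independent:
  fixes \<gamma> :: "nat \<Rightarrow> real"
  assumes cha: "children a \<noteq> {}"
    and z: "\<forall>x<n. (\<Sum>y\<in>first_children. \<gamma> y * (\<Sum>v<n. psd_vec y v * trans_mat v x)) = 0"
  shows "\<forall>y\<in>first_children. \<gamma> y = 0"
proof -
  define \<alpha> where "\<alpha> = (\<lambda>v. \<Sum>y\<in>first_children. \<gamma> y * psd_vec y v)"
  have coords: "\<And>v. v \<in> T \<Longrightarrow> \<alpha> v = (if parent v = a then 3 else 1) * \<gamma> (first_child (parent v))"
    unfolding \<alpha>_def using psd_combination[OF cha, where \<gamma> = \<gamma>] by simp_all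
  have "(\<Sum>v<n. \<alpha> v * trans_mat v x) = 0" if "x < n" for x
  proof -
    have "(\<Sum>v<n. \<alpha> v * trans_mat v x) = (\<Sum>y\<in>first_children. \<gamma> y * (\<Sum>v<n. psd_vec y v * trans_mat v x))"
      unfolding \<alpha>_def by (simp add: sum_distrib_left sum_distrib_right mult_ac sum.swap[of _ first_children])
    then show ?thesis using z that by simp
  qed
  then have \<alpha>0: "\<forall>v<n. \<alpha> v = 0" by (rule trans_mat_independent)
  show ?thesis
  proof
    fix y assume y: "y \<in> first_children"
    then have yT: "y \<in> T" and yfc: "first_child (parent y) = y" by (auto simp: first_children_def)
    then show "\<gamma> y = 0" using coords[OF yT] \<alpha>0 T_D[OF yT] by (cases "parent y = a") auto
  qed
qed

lemma quad_form_combination: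
  "quad_form DM n (\<lambda>x. \<Sum>i\<in>I. \<beta> i * (\<Sum>v<n. A i v * trans_mat v x)) = gram_form (\<lambda>v. \<Sum>i\<in>I. \<beta> i * A i v)"
proof -
  have "(\<lambda>x. \<Sum>i\<in>I. \<beta> i * (\<Sum>v<n. A i v * trans_mat v x)) = (\<lambda>x. \<Sum>v<n. (\<Sum>i\<in>I. \<beta> i * A i v) * trans_mat v x)"
    by (rule ext) (simp add: sum_distrib_left sum_distrib_right mult_ac sum.swap[of _ I])
  then show ?thesis using quad_form_trans by simp
qed

lemma neg_inertia_children_a:
  assumes cha: "children a \<noteq> {}"
  shows "neg_inertia DM = card (leaves E n) + 2"
proof -
  have "card ({a, b, c} \<union> (T - first_children)) \<le> neg_inertia DM"
    by (rule neg_inertia_ge_card_neg_definite[OF DM_carrier DM_sym,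
          where v = "\<lambda>i x. \<Sum>v<n. neg_vec i v * trans_mat v x"])
      (use finite_T gram_form_neg_combination[OF cha] in \<open>auto simp: quad_form_combination\<close>)
  moreover have "neg_inertia DM + card first_children \<le> n"
    by (rule neg_inertia_le_card_psd[OF DM_carrier DM_sym,
          where w = "\<lambda>y x. \<Sum>v<n. psd_vec y v * trans_mat v x"])
      (use finite_subset[OF first_children_T finite_T] psd_combination_independent[OF cha]
        gram_form_psd_combination[OF cha] in \<open>auto simp: quad_form_combination\<close>)
  ultimately show ?thesis using card_leaves_first_children[OF cha] by simp
qed

lemma neg_inertia_no_children_a:
  assumes cha: "children a = {}"
  shows "neg_inertia DM = card (leaves E n) + 2"
proof -
  have T: "T = {}" by (rule T_empty_if_no_children_a[OF cha])
  have Q: "gram_form \<alpha> = -2 * (\<alpha> c ^ 2 + \<alpha> c * \<alpha> b + \<alpha> b ^ 2) - 2 * \<alpha> a * \<alpha> b" for \<alpha>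
    unfolding gram_form_explicit using T cha
    by (simp add: child_sum_def deep_sum_def power2_eq_square algebra_simps)
  have "card {b, c} \<le> neg_inertia DM"
  proof (rule neg_inertia_ge_card_neg_definite[OF DM_carrier DM_sym finite.insertI[OF finite.insertI[OF finite.emptyI]], where
        v = "\<lambda>i x. \<Sum>v<n. of_bool (v = i) * trans_mat v x"])
    fix \<beta> :: "nat \<Rightarrow> real" assume "\<exists>i\<in>{b, c}. \<beta> i \<noteq> 0"
    then show "quad_form DM n (\<lambda>x. \<Sum>i\<in>{b, c}. \<beta> i * (\<Sum>v<n. of_bool (v = i) * trans_mat v x)) < 0"
      unfolding quad_form_combination Q using triangle_distinct sq_add_mult_add_sq_pos[of "\<beta> c" "\<beta> b"] by auto
  qed
  moreover have "neg_inertia DM + card {a} \<le> n"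
  proof (rule neg_inertia_le_card_psd[OF DM_carrier DM_sym finite.insertI[OF finite.emptyI], where
        w = "\<lambda>i x. \<Sum>v<n. of_bool (v = i) * trans_mat v x"])
    fix \<gamma> :: "nat \<Rightarrow> real"
    show "quad_form DM n (\<lambda>x. \<Sum>j\<in>{a}. \<gamma> j * (\<Sum>v<n. of_bool (v = j) * trans_mat v x)) \<ge> 0"
      unfolding quad_form_combination Q using triangle_distinct by simp
    assume z: "\<forall>x<n. (\<Sum>j\<in>{a}. \<gamma> j * (\<Sum>v<n. of_bool (v = j) * trans_mat v x)) = 0"
    have unit: "(\<Sum>v<n. of_bool (v = a) * trans_mat v x) = trans_mat a x" for x
      using sum_delta_right[OF tri(1), of "\<lambda>v. trans_mat v x"] by (simp add: of_bool_def)
    have single: "(\<Sum>j\<in>{a}. g j) = (g a :: real)" for g by simp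
    have "\<gamma> a * trans_mat a a = 0" using z[rule_format, OF tri(1)] by (simp only: single unit)
    then show "\<forall>j\<in>{a}. \<gamma> j = 0" using trans_mat_explicit(1) by simp
  qed
  moreover have "n = 3" "leaves E n = {}" using card_vertices leaves_eq T by simp_all
  ultimately show ?thesis using triangle_distinct by simp
qed

theorem neg_inertia_dist_sq_matrix: "neg_inertia DM = card (leaves E n) + 2"
  using neg_inertia_children_a neg_inertia_no_children_a by blast

end

theorem theorem7p2:
  fixes E :: "nat \<Rightarrow> nat \<Rightarrow> bool" and n :: nat
  assumes n_gt: "n > 2"
    and sym: "\<And>u v. u < n \<Longrightarrow> v < n \<Longrightarrow> E u v \<longleftrightarrow> E v u"
    and irrefl: "\<And>v. v < n \<Longrightarrow> \<not> E v v"
    and conn: "connected_graph E n"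
    and tri: "a < n" "b < n" "c < n" "distinct [a, b, c]" "E a b" "E b c" "E c a"
    and unique_cycle: "\<And>xs. is_cycle E n xs \<Longrightarrow> set xs = {a, b, c}"
    and deg_b: "degree E n b = 2" and deg_c: "degree E n c = 2"
  shows "neg_inertia (dist_sq_matrix E n) = card (leaves E n) + 2"
proof -
  interpret triangle_with_tree E n a b c
    by unfold_locales (use sym irrefl conn tri unique_cycle deg_b deg_c in auto)
  show ?thesis by (rule neg_inertia_dist_sq_matrix)
qed

end
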